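(* Let $\rho$ be a state on $\mathbb{C}^M\otimes\mathbb{C}^N$, fix an orthonormal basis $\{|f_n\rangle\}$ of $\mathbb{C}^N$ and a positive integer $K$ such that $\rho$ admits a decomposition into $K$ rank-one terms. The following are equivalent: (a) $\rho$ is $K$-separable; (b) there is an orthonormal basis $\{|e_m\rangle\}$ of $\mathbb{C}^M$ such that for every decomposition $\rho=\sum_{l=1}^K|\Phi_l\rangle\langle\Phi_l|$, with Gram vectors $w''_{mn}\in\mathbb{C}^K$, $w''^{\,l}_{mn}=\langle\Phi_l|e_m\otimes f_n\rangle$, there exist $K\times K$ matrices $M_{mk}$ ($m,k=1,\dots,M$), each normal and all pairwise commuting, such that $M_{mk}w''_{kn}=w''_{mn}$ for all $m,k\in\{1,\dots,M\}$, $n\in\{1,\dots,N\}$; (c) for some orthonormal basis $\{|e_m\rangle\}$ of $\mathbb{C}^M$ and some decomposition $\rho=\sum_{l=1}^K|\Phi_l\rangle\langle\Phi_l|$, there exist pairwise commuting normal $K\times K$ matrices $M_{mk}$ with $M_{mk}w''_{kn}=w''_{mn}$ for all $m,k,n$, where $w''_{mn}$ are defined as in (b).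
   Context: A state $\rho$ is $K$-separable if $\rho=\sum_{l=1}^K|\varphi_l\otimes\psi_l\rangle\langle\varphi_l\otimes\psi_l|$ for some vectors $|\varphi_l\rangle\in\mathbb{C}^M$, $|\psi_l\rangle\in\mathbb{C}^N$ (a decomposition into $K$ rank-one product terms). A matrix $X$ is normal if $XX^\dagger=X^\dagger X$. *)

theory Defs
  imports "HOL-Analysis.Analysis"
begin

text \<open>A vector of C^M is a function v :: nat => complex, only the
  components v i with i < M matter. A vector of C^M (x) C^N is a function
  Phi :: nat => nat => complex, Phi i j being the coefficient of the standard
  product basis vector |i> (x) |j> (i < M, j < N). An operator rho on
  C^M (x) C^N is given by its matrix entries rho i j i' j' = <i j| rho |i' j'>.
  A K x K matrix is a function X :: nat => nat => complex (indices < K).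
  A family of K vectors Phi_1..Phi_K is indexed by l < K.\<close>

definition is_state :: "nat \<Rightarrow> nat \<Rightarrow> (nat \<Rightarrow> nat \<Rightarrow> nat \<Rightarrow> nat \<Rightarrow> complex) \<Rightarrow> bool" where
  "is_state M N \<rho> \<longleftrightarrow>
     (\<forall>i<M. \<forall>j<N. \<forall>i'<M. \<forall>j'<N. \<rho> i j i' j' = cnj (\<rho> i' j' i j)) \<and>
     (\<forall>v :: nat \<Rightarrow> nat \<Rightarrow> complex.
        (\<Sum>i<M. \<Sum>j<N. \<Sum>i'<M. \<Sum>j'<N. cnj (v i j) * \<rho> i j i' j' * v i' j') \<in> \<real> \<and>
        0 \<le> Re (\<Sum>i<M. \<Sum>j<N. \<Sum>i'<M. \<Sum>j'<N. cnj (v i j) * \<rho> i j i' j' * v i' j')) \<and>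
     (\<Sum>i<M. \<Sum>j<N. \<rho> i j i j) = 1"

definition is_decomp :: "nat \<Rightarrow> nat \<Rightarrow> nat \<Rightarrow> (nat \<Rightarrow> nat \<Rightarrow> nat \<Rightarrow> nat \<Rightarrow> complex)
    \<Rightarrow> (nat \<Rightarrow> nat \<Rightarrow> nat \<Rightarrow> complex) \<Rightarrow> bool" where
  "is_decomp M N K \<rho> \<Phi> \<longleftrightarrow>
     (\<forall>i<M. \<forall>j<N. \<forall>i'<M. \<forall>j'<N. \<rho> i j i' j' = (\<Sum>l<K. \<Phi> l i j * cnj (\<Phi> l i' j')))"

definition K_separable :: "nat \<Rightarrow> nat \<Rightarrow> nat \<Rightarrow> (nat \<Rightarrow> nat \<Rightarrow> nat \<Rightarrow> nat \<Rightarrow> complex) \<Rightarrow> bool" where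
  "K_separable M N K \<rho> \<longleftrightarrow>
     (\<exists>(\<phi> :: nat \<Rightarrow> nat \<Rightarrow> complex) (\<psi> :: nat \<Rightarrow> nat \<Rightarrow> complex).
        is_decomp M N K \<rho> (\<lambda>l i j. \<phi> l i * \<psi> l j))"

text \<open>e_0..e_{M-1} (e m i = i-th coordinate of e_m) is an orthonormal basis of C^M\<close>
definition is_onb :: "nat \<Rightarrow> (nat \<Rightarrow> nat \<Rightarrow> complex) \<Rightarrow> bool" where
  "is_onb M e \<longleftrightarrow> (\<forall>m<M. \<forall>k<M. (\<Sum>i<M. cnj (e m i) * e k i) = (if m = k then 1 else 0))"

definition gram_vec :: "nat \<Rightarrow> nat \<Rightarrow> (nat \<Rightarrow> nat \<Rightarrow> nat \<Rightarrow> complex) \<Rightarrow> (nat \<Rightarrow> nat \<Rightarrow> complex)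
    \<Rightarrow> (nat \<Rightarrow> nat \<Rightarrow> complex) \<Rightarrow> nat \<Rightarrow> nat \<Rightarrow> nat \<Rightarrow> complex" where
  "gram_vec M N \<Phi> e f l m n = (\<Sum>i<M. \<Sum>j<N. cnj (\<Phi> l i j) * e m i * f n j)"

definition kmat_mult :: "nat \<Rightarrow> (nat \<Rightarrow> nat \<Rightarrow> complex) \<Rightarrow> (nat \<Rightarrow> nat \<Rightarrow> complex) \<Rightarrow> nat \<Rightarrow> nat \<Rightarrow> complex" where
  "kmat_mult K X Y i k = (\<Sum>j<K. X i j * Y j k)"

definition kmat_adjoint :: "(nat \<Rightarrow> nat \<Rightarrow> complex) \<Rightarrow> nat \<Rightarrow> nat \<Rightarrow> complex" where
  "kmat_adjoint X i k = cnj (X k i)"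

definition kmat_normal :: "nat \<Rightarrow> (nat \<Rightarrow> nat \<Rightarrow> complex) \<Rightarrow> bool" where
  "kmat_normal K X \<longleftrightarrow>
     (\<forall>i<K. \<forall>k<K. kmat_mult K X (kmat_adjoint X) i k = kmat_mult K (kmat_adjoint X) X i k)"

definition kmat_commute :: "nat \<Rightarrow> (nat \<Rightarrow> nat \<Rightarrow> complex) \<Rightarrow> (nat \<Rightarrow> nat \<Rightarrow> complex) \<Rightarrow> bool" where
  "kmat_commute K X Y \<longleftrightarrow> (\<forall>i<K. \<forall>k<K. kmat_mult K X Y i k = kmat_mult K Y X i k)"

definition gram_condition :: "nat \<Rightarrow> nat \<Rightarrow> nat \<Rightarrow> (nat \<Rightarrow> nat \<Rightarrow> nat \<Rightarrow> complex)
    \<Rightarrow> (nat \<Rightarrow> nat \<Rightarrow> complex) \<Rightarrow> (nat \<Rightarrow> nat \<Rightarrow> complex) \<Rightarrow> bool" where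
  "gram_condition M N K \<Phi> e f \<longleftrightarrow>
     (\<exists>Mat :: nat \<Rightarrow> nat \<Rightarrow> nat \<Rightarrow> nat \<Rightarrow> complex.
        (\<forall>m<M. \<forall>k<M. kmat_normal K (Mat m k)) \<and>
        (\<forall>m<M. \<forall>k<M. \<forall>m'<M. \<forall>k'<M. kmat_commute K (Mat m k) (Mat m' k')) \<and>
        (\<forall>m<M. \<forall>k<M. \<forall>n<N. \<forall>l<K.
           (\<Sum>j<K. Mat m k l j * gram_vec M N \<Phi> e f j k n) = gram_vec M N \<Phi> e f l m n))"

end

theory Submission
  imports Defs "Jordan_Normal_Form.Char_Poly"
begin

text \<open>
  (a) \<Longrightarrow> (b).  If rho = sum_l |phi_l (x) psi_l><phi_l (x) psi_l|, choose an orthonormal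
  basis e of C^M in "generic position": a twisted discrete Fourier basis with
  <phi_l|e_m> \<noteq> 0 whenever phi_l \<noteq> 0.  The Gram vectors of the product decomposition
  factor as w^l_mn = <phi_l|e_m> <psi_l|f_n>, so the diagonal matrices
  diag_l(<phi_l|e_m> / <phi_l|e_k>) do the job.  Any other decomposition of rho into
  K terms differs from this one by a K x K unitary (unitary freedom of
  decompositions, proved via Householder reflections), and conjugating the
  matrices by that unitary keeps them normal, commuting and intertwining.
  (b) \<Longrightarrow> (c) is immediate since some decomposition exists.
  (c) \<Longrightarrow> (a).  Commuting normal matrices are simultaneously unitarily
  diagonalizable (common eigenvector of an invariant subspace plus deflation).
  Mixing the decomposition with (the transpose of) that unitary gives a decomposition
  whose Gram vectors satisfy w^l_mn = d^l_m w^l_0n; expanding Phi_l in the product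
  basis e_m (x) f_n then exhibits Phi_l as a product vector.
\<close>

section \<open>Vectors and matrices of size K\<close>

definition vinner :: "nat \<Rightarrow> (nat \<Rightarrow> complex) \<Rightarrow> (nat \<Rightarrow> complex) \<Rightarrow> complex" where
  "vinner K x y = (\<Sum>i<K. cnj (x i) * y i)"

definition mvec :: "nat \<Rightarrow> (nat \<Rightarrow> nat \<Rightarrow> complex) \<Rightarrow> (nat \<Rightarrow> complex) \<Rightarrow> nat \<Rightarrow> complex" where
  "mvec K A x = (\<lambda>i. \<Sum>j<K. A i j * x j)"

definition kmat_unitary :: "nat \<Rightarrow> (nat \<Rightarrow> nat \<Rightarrow> complex) \<Rightarrow> bool" where
  "kmat_unitary K U \<longleftrightarrow> (\<forall>i<K. \<forall>j<K. (\<Sum>k<K. cnj (U k i) * U k j) = (if i = j then 1 else 0))"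

definition kmat_id :: "nat \<Rightarrow> nat \<Rightarrow> complex" where
  "kmat_id i j = (if i = j then 1 else 0)"

lemma sum_kronecker:
  fixes f :: "nat \<Rightarrow> complex"
  assumes "j < K"
  shows "(\<Sum>k<K. (if j = k then 1 else 0) * f k) = f j"
    and "(\<Sum>k<K. f k * (if k = j then 1 else 0)) = f j"
    and "(\<Sum>k<K. f k * (if j = k then 1 else 0)) = f j"
  using assms by (simp_all add: if_distrib if_distribR cong: if_cong)

lemma sum_swap3: "(\<Sum>a\<in>A. \<Sum>b\<in>B. \<Sum>c\<in>C. f a b c) = (\<Sum>b\<in>B. \<Sum>c\<in>C. \<Sum>a\<in>A. f a b c)"
proof -
  have "(\<Sum>a\<in>A. \<Sum>b\<in>B. \<Sum>c\<in>C. f a b c) = (\<Sum>b\<in>B. \<Sum>a\<in>A. \<Sum>c\<in>C. f a b c)"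
    by (rule sum.swap)
  also have "\<dots> = (\<Sum>b\<in>B. \<Sum>c\<in>C. \<Sum>a\<in>A. f a b c)" by (rule sum.cong[OF refl], rule sum.swap)
  finally show ?thesis .
qed

text \<open>A one-sided inverse of a square matrix is two-sided (transferred from the
  matrix library); it turns column orthonormality into row orthonormality.\<close>
lemma one_sided_inverse:
  fixes X Y :: "nat \<Rightarrow> nat \<Rightarrow> complex"
  assumes "\<forall>i<K. \<forall>j<K. (\<Sum>k<K. X i k * Y k j) = (if i = j then 1 else 0)"
  shows "\<forall>i<K. \<forall>j<K. (\<Sum>k<K. Y i k * X k j) = (if i = j then 1 else 0)"
proof (intro allI impI)
  fix i j assume ij: "i < K" "j < K"
  let ?A = "mat K K (\<lambda>(i,j). X i j)"
  let ?B = "mat K K (\<lambda>(i,j). Y i j)"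
  have A: "?A \<in> carrier_mat K K" and B: "?B \<in> carrier_mat K K" by auto
  have "?A * ?B = 1\<^sub>m K"
    using assms by (auto simp: scalar_prod_def atLeast0LessThan intro!: eq_matI)
  then have "?B * ?A = 1\<^sub>m K" by (rule mat_mult_left_right_inverse[OF A B])
  then have "(?B * ?A) $$ (i,j) = 1\<^sub>m K $$ (i,j)" by simp
  then show "(\<Sum>k<K. Y i k * X k j) = (if i = j then 1 else 0)"
    using ij by (simp add: scalar_prod_def atLeast0LessThan)
qed

lemma kmat_unitary_rows:
  assumes "kmat_unitary K U" "i < K" "j < K"
  shows "(\<Sum>k<K. U i k * cnj (U j k)) = (if i = j then 1 else 0)"
proof -
  have "\<forall>i<K. \<forall>j<K. (\<Sum>k<K. cnj (U k i) * U k j) = (if i = j then 1 else 0)"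
    using assms(1) unfolding kmat_unitary_def by simp
  from one_sided_inverse[OF this] assms(2,3) show ?thesis by simp
qed

lemma onb_columns:
  assumes "is_onb M e" "i < M" "i' < M"
  shows "(\<Sum>m<M. e m i * cnj (e m i')) = (if i = i' then 1 else 0)"
proof -
  have "\<forall>a<M. \<forall>b<M. (\<Sum>k<M. cnj (e a k) * e b k) = (if a = b then 1 else 0)"
    using assms(1) unfolding is_onb_def by simp
  from one_sided_inverse[OF this] assms(2,3) show ?thesis by simp
qed

lemma vinner_cong: "(\<forall>i<K. x i = x' i) \<Longrightarrow> (\<forall>i<K. y i = y' i) \<Longrightarrow> vinner K x y = vinner K x' y'"
  unfolding vinner_def by (rule sum.cong) auto

lemma vinner_cnj: "vinner K x y = cnj (vinner K y x)"
  unfolding vinner_def by (simp add: mult.commute)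

lemma vinner_self: "vinner K u u = complex_of_real (\<Sum>i<K. (cmod (u i))^2)"
  unfolding vinner_def of_real_sum
  by (rule sum.cong) (simp_all add: complex_norm_square mult.commute del: of_real_power)

lemma vinner_self_zero: assumes "vinner K u u = 0" "i < K" shows "u i = 0"
proof -
  have "(\<Sum>i<K. (cmod (u i))^2) = 0" using assms(1) by (simp only: vinner_self of_real_eq_0_iff)
  then have "(cmod (u i))^2 = 0" using assms(2) by (simp add: sum_nonneg_eq_0_iff)
  then show ?thesis by simp
qed

lemma vinner_self_real: "vinner K u u = complex_of_real (Re (vinner K u u))" "Re (vinner K u u) \<ge> 0"
  unfolding vinner_self by (auto intro: sum_nonneg)

lemma vinner_diff_left: "vinner K (\<lambda>i. x i - y i) z = vinner K x z - vinner K y z"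
  unfolding vinner_def by (simp add: sum_subtractf algebra_simps)

lemma vinner_scale: "vinner K (\<lambda>i. \<alpha> * x i) (\<lambda>i. \<beta> * y i) = cnj \<alpha> * \<beta> * vinner K x y"
  unfolding vinner_def by (simp add: sum_distrib_left algebra_simps)

lemma vinner_lincomb_right: "vinner K x (\<lambda>i. \<Sum>a\<in>A. c a * y a i) = (\<Sum>a\<in>A. c a * vinner K x (y a))"
proof -
  have "vinner K x (\<lambda>i. \<Sum>a\<in>A. c a * y a i) = (\<Sum>i<K. \<Sum>a\<in>A. c a * (cnj (x i) * y a i))"
    unfolding vinner_def by (simp add: sum_distrib_left algebra_simps)
  also have "\<dots> = (\<Sum>a\<in>A. \<Sum>i<K. c a * (cnj (x i) * y a i))" by (rule sum.swap)
  also have "\<dots> = (\<Sum>a\<in>A. c a * vinner K x (y a))" unfolding vinner_def by (simp add: sum_distrib_left)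
  finally show ?thesis .
qed

lemma vinner_basis: "j < K \<Longrightarrow> vinner K (\<lambda>i. if i = j then 1 else 0) y = y j"
  unfolding vinner_def by (simp add: if_distrib if_distribR cong: if_cong)

lemma normalize_vec:
  assumes "\<exists>i<K. v i \<noteq> 0"
  shows "\<exists>c. vinner K (\<lambda>i. c * v i) (\<lambda>i. c * v i) = 1"
proof -
  obtain i0 where i0: "i0 < K" "v i0 \<noteq> 0" using assms by blast
  define s where "s = sqrt (Re (vinner K v v))"
  have rr: "vinner K v v = complex_of_real (Re (vinner K v v))" by (rule vinner_self_real)
  have "vinner K v v \<noteq> 0" using vinner_self_zero[of K v i0] i0 by auto
  then have "Re (vinner K v v) \<noteq> 0" using rr by (metis of_real_0)
  then have spos: "s > 0" using vinner_self_real(2)[of K v] unfolding s_def by simp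
  have "vinner K (\<lambda>i. (1 / complex_of_real s) * v i) (\<lambda>i. (1 / complex_of_real s) * v i)
      = cnj (1 / complex_of_real s) * (1 / complex_of_real s) * vinner K v v" by (rule vinner_scale)
  also have "\<dots> = 1 / (complex_of_real s)^2 * complex_of_real (s^2)"
    using rr vinner_self_real(2)[of K v] unfolding s_def by (simp add: power2_eq_square)
  also have "\<dots> = 1" using spos by (simp add: field_simps)
  finally show ?thesis by blast
qed

lemma mvec_cong: "(\<forall>j<K. x j = x' j) \<Longrightarrow> mvec K A x i = mvec K A x' i"
  unfolding mvec_def by (rule sum.cong) auto

lemma mvec_mat_cong: "(\<forall>j<K. X i j = Y i j) \<Longrightarrow> mvec K X x i = mvec K Y x i"
  unfolding mvec_def by (rule sum.cong) auto

lemma mvec_mult: "mvec K (kmat_mult K A B) x i = mvec K A (mvec K B x) i"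
proof -
  have "mvec K A (mvec K B x) i = (\<Sum>j<K. \<Sum>k<K. A i j * B j k * x k)"
    unfolding mvec_def by (simp add: sum_distrib_left mult.assoc)
  also have "\<dots> = (\<Sum>k<K. \<Sum>j<K. A i j * B j k * x k)" by (rule sum.swap)
  also have "\<dots> = mvec K (kmat_mult K A B) x i"
    unfolding mvec_def kmat_mult_def by (simp add: sum_distrib_right)
  finally show ?thesis ..
qed

lemma mvec_lincomb: "mvec K B (\<lambda>i. \<Sum>b\<in>A. c b * u b i) i = (\<Sum>b\<in>A. c b * mvec K B (u b) i)"
proof -
  have "mvec K B (\<lambda>i. \<Sum>b\<in>A. c b * u b i) i = (\<Sum>j<K. \<Sum>b\<in>A. c b * (B i j * u b j))"
    unfolding mvec_def by (simp add: sum_distrib_left algebra_simps)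
  also have "\<dots> = (\<Sum>b\<in>A. \<Sum>j<K. c b * (B i j * u b j))" by (rule sum.swap)
  also have "\<dots> = (\<Sum>b\<in>A. c b * mvec K B (u b) i)" unfolding mvec_def by (simp add: sum_distrib_left)
  finally show ?thesis .
qed

lemma mvec_add_scaled: "mvec K A (\<lambda>i. \<alpha> * x i + y i) i = \<alpha> * mvec K A x i + mvec K A y i"
  unfolding mvec_def by (simp add: sum.distrib sum_distrib_left algebra_simps)

lemma mvec_zero: "mvec K A (\<lambda>i. 0) i = 0"
  unfolding mvec_def by simp

lemma mvec_scale: "mvec K A (\<lambda>i. \<alpha> * x i) i = \<alpha> * mvec K A x i"
  unfolding mvec_def by (simp add: sum_distrib_left algebra_simps)

lemma mvec_basis: "j < K \<Longrightarrow> mvec K A (\<lambda>i. if i = j then 1 else 0) i' = A i' j"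
  unfolding mvec_def by (rule sum_kronecker(2))

lemma mvec_id: "i < K \<Longrightarrow> mvec K kmat_id x i = x i"
  unfolding mvec_def kmat_id_def by (rule sum_kronecker(1))

lemma kmat_mult_assoc: "kmat_mult K (kmat_mult K X Y) Z = kmat_mult K X (kmat_mult K Y Z)"
proof (intro ext)
  fix i k
  have "kmat_mult K (kmat_mult K X Y) Z i k = (\<Sum>j<K. \<Sum>l<K. X i l * Y l j * Z j k)"
    unfolding kmat_mult_def by (simp add: sum_distrib_right)
  also have "\<dots> = (\<Sum>l<K. \<Sum>j<K. X i l * Y l j * Z j k)" by (rule sum.swap)
  also have "\<dots> = kmat_mult K X (kmat_mult K Y Z) i k"
    unfolding kmat_mult_def by (simp add: sum_distrib_left mult.assoc)
  finally show "kmat_mult K (kmat_mult K X Y) Z i k = kmat_mult K X (kmat_mult K Y Z) i k" .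
qed

lemma kmat_adjoint_mult: "kmat_adjoint (kmat_mult K X Y) = kmat_mult K (kmat_adjoint Y) (kmat_adjoint X)"
  by (intro ext) (simp add: kmat_adjoint_def kmat_mult_def cnj_sum mult.commute)

lemma kmat_adjoint_adjoint: "kmat_adjoint (kmat_adjoint X) = X"
  by (intro ext) (simp add: kmat_adjoint_def)

lemma kmat_mult_cong_right: "(\<forall>j<K. Z j k = Z' j k) \<Longrightarrow> kmat_mult K A Z i k = kmat_mult K A Z' i k"
  unfolding kmat_mult_def by (rule sum.cong) auto

lemma kmat_mult_cong_left: "(\<forall>j<K. X i j = X' i j) \<Longrightarrow> kmat_mult K X Z i k = kmat_mult K X' Z i k"
  unfolding kmat_mult_def by (rule sum.cong) auto

lemma unitary_id: "kmat_unitary K kmat_id"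
  unfolding kmat_unitary_def
proof (intro allI impI)
  fix i j assume ij: "i < K" "j < K"
  have "(\<Sum>k<K. cnj (kmat_id k i) * kmat_id k j) = (\<Sum>k<K. (if i = k then 1 else 0) * kmat_id k j)"
    by (rule sum.cong) (auto simp: kmat_id_def)
  also have "\<dots> = kmat_id i j" using sum_kronecker(1)[OF ij(1)] .
  finally show "(\<Sum>k<K. cnj (kmat_id k i) * kmat_id k j) = (if i = j then 1 else 0)"
    by (simp add: kmat_id_def)
qed

lemma unitary_vinner:
  assumes "kmat_unitary K U"
  shows "vinner K (mvec K U x) (mvec K U y) = vinner K x y"
proof -
  have "vinner K (mvec K U x) (mvec K U y)
      = (\<Sum>i<K. \<Sum>j<K. \<Sum>k<K. cnj (x j) * y k * (cnj (U i j) * U i k))"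
    unfolding vinner_def mvec_def sum_product cnj_sum by (intro sum.cong refl) (simp add: algebra_simps)
  also have "\<dots> = (\<Sum>j<K. \<Sum>k<K. \<Sum>i<K. cnj (x j) * y k * (cnj (U i j) * U i k))"
    by (rule sum_swap3)
  also have "\<dots> = (\<Sum>j<K. \<Sum>k<K. cnj (x j) * y k * (\<Sum>i<K. cnj (U i j) * U i k))"
    by (simp add: sum_distrib_left)
  also have "\<dots> = (\<Sum>j<K. \<Sum>k<K. cnj (x j) * y k * (if j = k then 1 else 0))"
    using assms unfolding kmat_unitary_def by (intro sum.cong refl) auto
  also have "\<dots> = vinner K x y"
    unfolding vinner_def by (intro sum.cong refl) (rule sum_kronecker(3), simp)
  finally show ?thesis .
qed

lemma unitary_mult:
  assumes "kmat_unitary K R" "kmat_unitary K U"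
  shows "kmat_unitary K (kmat_mult K R U)"
  unfolding kmat_unitary_def
proof (intro allI impI)
  fix i j assume ij: "i < K" "j < K"
  have "(\<Sum>k<K. cnj (kmat_mult K R U k i) * kmat_mult K R U k j)
     = vinner K (mvec K R (\<lambda>k. U k i)) (mvec K R (\<lambda>k. U k j))"
    unfolding vinner_def mvec_def kmat_mult_def by simp
  also have "\<dots> = vinner K (\<lambda>k. U k i) (\<lambda>k. U k j)" using unitary_vinner[OF assms(1)] .
  also have "\<dots> = (if i = j then 1 else 0)"
    using assms(2) ij unfolding kmat_unitary_def vinner_def by simp
  finally show "(\<Sum>k<K. cnj (kmat_mult K R U k i) * kmat_mult K R U k j) = (if i = j then 1 else 0)" .
qed

lemma unitary_adjoint: "kmat_unitary K U \<Longrightarrow> kmat_unitary K (kmat_adjoint U)"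
  unfolding kmat_unitary_def[of K "kmat_adjoint U"] kmat_adjoint_def using kmat_unitary_rows by simp

lemma unitary_cnj:
  assumes "kmat_unitary K U"
  shows "kmat_unitary K (\<lambda>l k. cnj (U l k))"
  unfolding kmat_unitary_def
proof (intro allI impI)
  fix i j assume "i < K" "j < K"
  then have "cnj (\<Sum>k<K. cnj (U k i) * U k j) = (if i = j then 1 else 0)"
    using assms unfolding kmat_unitary_def by simp
  then show "(\<Sum>k<K. cnj (cnj (U k i)) * cnj (U k j)) = (if i = j then 1 else 0)"
    by (simp add: cnj_sum mult.commute)
qed

lemma unitary_right_inverse:
  assumes U: "kmat_unitary K U" and j: "j < K"
  shows "kmat_mult K (kmat_mult K U (kmat_adjoint U)) W j k = W j k"
proof -
  have "kmat_mult K (kmat_mult K U (kmat_adjoint U)) W j k = (\<Sum>l<K. (if j = l then 1 else 0) * W l k)"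
    unfolding kmat_mult_def kmat_adjoint_def using kmat_unitary_rows[OF U j]
    by (intro sum.cong refl) simp
  also have "\<dots> = W j k" by (rule sum_kronecker(1)[OF j])
  finally show ?thesis .
qed

lemma unitary_adjoint_mvec:
  assumes W: "kmat_unitary K W" and i: "i < K"
  shows "mvec K (kmat_adjoint W) (mvec K W y) i = y i"
proof -
  have "mvec K (kmat_adjoint W) (mvec K W y) i = mvec K (kmat_mult K (kmat_adjoint W) W) y i"
    by (rule mvec_mult[symmetric])
  also have "\<dots> = (\<Sum>k<K. (if i = k then 1 else 0) * y k)"
    unfolding mvec_def using W i unfolding kmat_unitary_def
    by (intro sum.cong refl) (simp add: kmat_mult_def kmat_adjoint_def)
  also have "\<dots> = y i" by (rule sum_kronecker(1)[OF i])
  finally show ?thesis .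
qed

lemma unitary_expansion:
  assumes "kmat_unitary K U" "i < K"
  shows "(\<Sum>a<K. vinner K (\<lambda>k. U k a) z * U i a) = z i"
proof -
  have "(\<Sum>a<K. vinner K (\<lambda>k. U k a) z * U i a) = (\<Sum>a<K. \<Sum>k<K. z k * (U i a * cnj (U k a)))"
    unfolding vinner_def by (simp add: sum_distrib_right sum_distrib_left algebra_simps)
  also have "\<dots> = (\<Sum>k<K. \<Sum>a<K. z k * (U i a * cnj (U k a)))" by (rule sum.swap)
  also have "\<dots> = (\<Sum>k<K. z k * (\<Sum>a<K. U i a * cnj (U k a)))" by (simp add: sum_distrib_left)
  also have "\<dots> = (\<Sum>k<K. z k * (if i = k then 1 else 0))"
    using kmat_unitary_rows[OF assms(1) assms(2)] by (intro sum.cong refl) auto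
  also have "\<dots> = z i" by (rule sum_kronecker(3)[OF assms(2)])
  finally show ?thesis .
qed

section \<open>Unitary freedom\<close>

definition householder :: "complex \<Rightarrow> (nat \<Rightarrow> complex) \<Rightarrow> nat \<Rightarrow> nat \<Rightarrow> complex" where
  "householder c u = (\<lambda>i j. (if i = j then 1 else 0) - c * u i * cnj (u j))"

lemma householder_mvec:
  assumes "i < K"
  shows "mvec K (householder c u) z i = z i - c * u i * vinner K u z"
proof -
  have "mvec K (householder c u) z i
      = (\<Sum>j<K. (if i = j then 1 else 0) * z j) - (\<Sum>j<K. c * u i * (cnj (u j) * z j))"
    unfolding mvec_def householder_def by (simp add: sum_subtractf algebra_simps)
  also have "\<dots> = z i - c * u i * vinner K u z"
    using assms unfolding vinner_def by (simp add: sum_kronecker(1) sum_distrib_left)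
  finally show ?thesis .
qed

lemma householder_unitary:
  assumes cu: "cnj c * c * vinner K u u = c + cnj c"
  shows "kmat_unitary K (householder c u)"
  unfolding kmat_unitary_def
proof (intro allI impI)
  fix i j assume ij: "i < K" "j < K"
  let ?R = "householder c u"
  have Rc: "cnj (?R k i) = (if i = k then 1 else 0) - cnj c * cnj (u k) * u i" for k
    unfolding householder_def by auto
  have "(\<Sum>k<K. cnj (?R k i) * ?R k j)
     = (\<Sum>k<K. (if i = k then 1 else 0) * (if k = j then 1 else 0)
       - (if i = k then 1 else 0) * (c * u k * cnj (u j))
       - (cnj c * cnj (u k) * u i) * (if k = j then 1 else 0)
       + (cnj c * c * u i * cnj (u j)) * (cnj (u k) * u k))"
    unfolding Rc by (rule sum.cong) (simp_all add: householder_def algebra_simps)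
  also have "\<dots> = (\<Sum>k<K. (if i = k then 1 else 0) * (if k = j then 1 else 0))
       - (\<Sum>k<K. (if i = k then 1 else 0) * (c * u k * cnj (u j)))
       - (\<Sum>k<K. (cnj c * cnj (u k) * u i) * (if k = j then 1 else 0))
       + cnj c * c * u i * cnj (u j) * (\<Sum>k<K. cnj (u k) * u k)"
    by (simp only: sum.distrib sum_subtractf sum_distrib_left)
  also have "\<dots> = (if i = j then 1 else 0) - c * u i * cnj (u j) - cnj c * cnj (u j) * u i
       + cnj c * c * u i * cnj (u j) * vinner K u u"
    using ij unfolding vinner_def
    by (simp only: sum_kronecker(1)[OF ij(1)] sum_kronecker(2)[OF ij(2)])
  also have "\<dots> = (if i = j then 1 else 0) + u i * cnj (u j) * (cnj c * c * vinner K u u - c - cnj c)"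
    by (simp add: algebra_simps)
  finally show "(\<Sum>k<K. cnj (?R k i) * ?R k j) = (if i = j then 1 else 0)"
    using cu by simp
qed

lemma reflection_unitary:
  assumes xy: "vinner K x x = vinner K y y" and ne: "\<exists>i<K. x i \<noteq> y i"
  shows "\<exists>R. kmat_unitary K R \<and> (\<forall>i<K. mvec K R x i = y i)
      \<and> (\<forall>z. vinner K (\<lambda>i. x i - y i) z = 0 \<longrightarrow> (\<forall>i<K. mvec K R z i = z i))"
proof -
  define u where "u = (\<lambda>i. x i - y i)"
  define a where "a = vinner K u x"
  have uu: "vinner K u u = a + cnj a"
  proof -
    have "a + cnj a - vinner K u u = (\<Sum>i<K. cnj (u i) * x i + u i * cnj (x i) - cnj (u i) * u i)"
      unfolding a_def vinner_def by (simp add: sum.distrib sum_subtractf cnj_sum)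
    also have "\<dots> = (\<Sum>i<K. cnj (x i) * x i - cnj (y i) * y i)"
      unfolding u_def by (rule sum.cong) (simp_all add: algebra_simps)
    also have "\<dots> = vinner K x x - vinner K y y" unfolding vinner_def by (simp add: sum_subtractf)
    finally show ?thesis using xy by simp
  qed
  have a0: "a \<noteq> 0"
  proof
    assume "a = 0"
    then have "vinner K u u = 0" using uu by simp
    then have "\<forall>i<K. u i = 0" using vinner_self_zero by blast
    then show False using ne unfolding u_def by auto
  qed
  define R where "R = householder (1 / a) u"
  have "kmat_unitary K R"
    unfolding R_def by (rule householder_unitary) (use a0 in \<open>simp add: uu field_simps\<close>)
  moreover have "\<forall>i<K. mvec K R x i = y i"
    using a0 by (simp add: R_def householder_mvec flip: a_def) (simp add: u_def)
  moreover have "\<forall>z. vinner K u z = 0 \<longrightarrow> (\<forall>i<K. mvec K R z i = z i)"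
    by (simp add: R_def householder_mvec)
  ultimately show ?thesis unfolding u_def by blast
qed

lemma reflection_step:
  assumes xy: "vinner K x x = vinner K y y" and orth: "\<forall>r\<in>S. vinner K (b r) x = vinner K (b r) y"
  shows "\<exists>R. kmat_unitary K R \<and> (\<forall>i<K. mvec K R x i = y i) \<and> (\<forall>r\<in>S. \<forall>i<K. mvec K R (b r) i = b r i)"
proof (cases "\<forall>i<K. x i = y i")
  case True
  then have "\<forall>i<K. mvec K kmat_id x i = y i" "\<forall>r\<in>S. \<forall>i<K. mvec K kmat_id (b r) i = b r i"
    by (simp_all add: mvec_id)
  then show ?thesis using unitary_id by blast
next
  case False
  then have "\<exists>i<K. x i \<noteq> y i" by auto
  from reflection_unitary[OF xy this] obtain R where R: "kmat_unitary K R" "\<forall>i<K. mvec K R x i = y i"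
    and Rfix: "\<forall>z. vinner K (\<lambda>i. x i - y i) z = 0 \<longrightarrow> (\<forall>i<K. mvec K R z i = z i)" by blast
  have "vinner K (\<lambda>i. x i - y i) (b r) = 0" if "r \<in> S" for r
  proof -
    have "vinner K (\<lambda>i. x i - y i) (b r) = cnj (vinner K (b r) x) - cnj (vinner K (b r) y)"
      by (simp add: vinner_diff_left vinner_cnj[of K x] vinner_cnj[of K y])
    then show ?thesis using orth that by simp
  qed
  then show ?thesis using R Rfix by blast
qed

text \<open>Two finite families of vectors with the same Gram matrix are related by a
  unitary; by induction, composing with one reflection step per new vector.\<close>
lemma gram_equal_unitary:
  fixes a b :: "'r \<Rightarrow> nat \<Rightarrow> complex"
  assumes "finite S" "\<forall>r\<in>S. \<forall>s\<in>S. vinner K (a r) (a s) = vinner K (b r) (b s)"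
  shows "\<exists>U. kmat_unitary K U \<and> (\<forall>r\<in>S. \<forall>i<K. mvec K U (a r) i = b r i)"
  using assms
proof (induction S rule: finite_induct)
  case empty
  then show ?case using unitary_id by blast
next
  case (insert p S)
  from insert.prems have "\<forall>r\<in>S. \<forall>s\<in>S. vinner K (a r) (a s) = vinner K (b r) (b s)" by auto
  from insert.IH[OF this] obtain U where U: "kmat_unitary K U"
    and Ua: "\<forall>r\<in>S. \<forall>i<K. mvec K U (a r) i = b r i" by blast
  define x where "x = mvec K U (a p)"
  have "vinner K (b r) x = vinner K (b r) (b p)" if "r \<in> S" for r
  proof -
    have "vinner K (b r) x = vinner K (mvec K U (a r)) (mvec K U (a p))"
      unfolding x_def using Ua that by (intro vinner_cong) auto
    also have "\<dots> = vinner K (a r) (a p)" using unitary_vinner[OF U] .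
    also have "\<dots> = vinner K (b r) (b p)" using insert.prems that by auto
    finally show ?thesis .
  qed
  moreover have "vinner K x x = vinner K (b p) (b p)"
    using unitary_vinner[OF U, of "a p" "a p"] insert.prems unfolding x_def by auto
  ultimately have "\<exists>R. kmat_unitary K R \<and> (\<forall>i<K. mvec K R x i = b p i)
      \<and> (\<forall>r\<in>S. \<forall>i<K. mvec K R (b r) i = b r i)"
    by (intro reflection_step) auto
  then obtain R where R: "kmat_unitary K R" "\<forall>i<K. mvec K R x i = b p i"
    "\<forall>r\<in>S. \<forall>i<K. mvec K R (b r) i = b r i" by blast
  have "mvec K (kmat_mult K R U) (a r) i = b r i" if r: "r \<in> insert p S" and i: "i < K" for r i
  proof -
    have "mvec K (kmat_mult K R U) (a r) i = mvec K R (mvec K U (a r)) i" by (rule mvec_mult)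
    also have "\<dots> = b r i"
    proof (cases "r = p")
      case True
      then show ?thesis using R(2) i by (simp add: x_def)
    next
      case False
      then have rS: "r \<in> S" using r by auto
      have "mvec K R (mvec K U (a r)) i = mvec K R (b r) i" using Ua rS by (intro mvec_cong) auto
      also have "\<dots> = b r i" using R(3) rS i by blast
      finally show ?thesis .
    qed
    finally show ?thesis .
  qed
  then show ?case using unitary_mult[OF R(1) U] by blast
qed

lemma orthonormal_extension:
  assumes U: "kmat_unitary K U" and d: "d < K" and r1: "vinner K r r = 1"
    and orth: "\<forall>a<d. vinner K (\<lambda>i. U i a) r = 0"
  defines "v \<equiv> (\<lambda>j. if j = d then r else (\<lambda>i. U i j))"
  assumes j: "j \<le> d" and j': "j' \<le> d"
  shows "vinner K (v j) (v j') = (if j = j' then 1 else 0)"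
proof -
  consider "j = d" "j' = d" | "j = d" "j' < d" | "j < d" "j' = d" | "j < d" "j' < d"
    using j j' by linarith
  then show ?thesis
  proof cases
    case 2
    then have "cnj (vinner K (\<lambda>i. U i j') r) = 0" using orth by simp
    then show ?thesis using 2 unfolding v_def by (simp add: vinner_cnj[of K r])
  next
    case 4
    then show ?thesis using U d unfolding v_def kmat_unitary_def vinner_def by auto
  qed (simp_all add: v_def r1 orth)
qed

text \<open>A unitary whose first d columns are orthonormal can be modified to have a given
  unit vector orthogonal to them as column d: map the standard basis vectors to them.\<close>
lemma extend_to_unitary:
  assumes U: "kmat_unitary K U" and d: "d < K" and r1: "vinner K r r = 1"
    and orth: "\<forall>a<d. vinner K (\<lambda>i. U i a) r = 0"
  shows "\<exists>U'. kmat_unitary K U' \<and> (\<forall>a<d. \<forall>i<K. U' i a = U i a) \<and> (\<forall>i<K. U' i d = r i)"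
proof -
  define ea where "ea = (\<lambda>j::nat. \<lambda>i::nat. if i = j then (1::complex) else 0)"
  define v where "v = (\<lambda>j. if j = d then r else (\<lambda>i. U i j))"
  have "vinner K (ea j) (ea j') = vinner K (v j) (v j')" if "j \<in> {..d}" "j' \<in> {..d}" for j j'
  proof -
    have "vinner K (ea j) (ea j') = (if j = j' then 1 else 0)"
      unfolding ea_def using vinner_basis[of j K] that d by simp
    also have "\<dots> = vinner K (v j) (v j')"
      unfolding v_def using orthonormal_extension[OF U d r1 orth] that by simp
    finally show ?thesis .
  qed
  then have "\<exists>U'. kmat_unitary K U' \<and> (\<forall>j\<in>{..d}. \<forall>i<K. mvec K U' (ea j) i = v j i)"
    by (intro gram_equal_unitary) auto
  then obtain U' where U': "kmat_unitary K U'" and e: "\<forall>j\<in>{..d}. \<forall>i<K. mvec K U' (ea j) i = v j i"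
    by blast
  have "U' i j = v j i" if "j \<le> d" "i < K" for i j
  proof -
    have "U' i j = mvec K U' (ea j) i" unfolding ea_def using mvec_basis[of j K U' i] that d by simp
    also have "\<dots> = v j i" using e that by auto
    finally show ?thesis .
  qed
  then show ?thesis using U' by (auto simp: v_def)
qed

section \<open>Eigenvectors of commuting matrices\<close>

text \<open>A linear subspace of C^K (closed under the operations and under changing
  components at indices \<ge> K, which are irrelevant).\<close>
definition ksubspace :: "nat \<Rightarrow> (nat \<Rightarrow> complex) set \<Rightarrow> bool" where
  "ksubspace K E \<longleftrightarrow> (\<lambda>i. 0) \<in> E \<and> (\<forall>x\<in>E. \<forall>y\<in>E. \<forall>\<alpha>. (\<lambda>i. \<alpha> * x i + y i) \<in> E)
     \<and> (\<forall>x\<in>E. \<forall>y. (\<forall>i<K. x i = y i) \<longrightarrow> y \<in> E)"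

lemma subspace_add_scaled: "ksubspace K E \<Longrightarrow> x \<in> E \<Longrightarrow> y \<in> E \<Longrightarrow> (\<lambda>i. \<alpha> * x i + y i) \<in> E"
  unfolding ksubspace_def by blast

lemma subspace_scale: "ksubspace K E \<Longrightarrow> x \<in> E \<Longrightarrow> (\<lambda>i. \<alpha> * x i) \<in> E"
  using subspace_add_scaled[of K E x "\<lambda>i. 0" \<alpha>] unfolding ksubspace_def by simp

lemma subspace_agree: "ksubspace K E \<Longrightarrow> x \<in> E \<Longrightarrow> \<forall>i<K. x i = y i \<Longrightarrow> y \<in> E"
  unfolding ksubspace_def by blast

lemma subspace_lincomb:
  assumes E: "ksubspace K E" and u: "\<forall>a<(d::nat). u a \<in> E"
  shows "(\<lambda>i. \<Sum>a<d. c a * u a i) \<in> E"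
  using u
proof (induction d)
  case 0
  then show ?case using E unfolding ksubspace_def by simp
next
  case (Suc d)
  then have "(\<lambda>i. c d * u d i + (\<Sum>a<d. c a * u a i)) \<in> E"
    by (intro subspace_add_scaled[OF E]) auto
  then show ?case by (simp add: add.commute)
qed

lemma orthonormal_coordinates:
  assumes U: "kmat_unitary K U" and dK: "d \<le> K" and a: "a < d"
  shows "vinner K (\<lambda>k. U k a) (\<lambda>i. \<Sum>b<d. c b * U i b) = c a"
proof -
  have "vinner K (\<lambda>k. U k a) (\<lambda>i. \<Sum>b<d. c b * U i b) = (\<Sum>b<d. c b * vinner K (\<lambda>k. U k a) (\<lambda>k. U k b))"
    by (rule vinner_lincomb_right)
  also have "\<dots> = (\<Sum>b<d. c b * (if a = b then 1 else 0))"
    using U a dK unfolding kmat_unitary_def vinner_def by (intro sum.cong refl) auto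
  also have "\<dots> = c a" by (rule sum_kronecker(3)[OF a])
  finally show ?thesis .
qed

lemma subspace_residual:
  assumes E: "ksubspace K E" and U: "kmat_unitary K U" and dK: "d \<le> K"
    and UE: "\<forall>a<d. (\<lambda>i. U i a) \<in> E" and zE: "z \<in> E"
  defines "r \<equiv> (\<lambda>i. z i - (\<Sum>a<d. vinner K (\<lambda>k. U k a) z * U i a))"
  shows "r \<in> E" and "\<forall>b<d. vinner K (\<lambda>k. U k b) r = 0"
proof -
  have "(\<lambda>i. \<Sum>a<d. vinner K (\<lambda>k. U k a) z * U i a) \<in> E"
    by (rule subspace_lincomb[OF E]) (use UE in auto)
  from subspace_add_scaled[OF E this zE, of "-1"] show "r \<in> E" unfolding r_def by simp
  show "\<forall>b<d. vinner K (\<lambda>k. U k b) r = 0"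
  proof (intro allI impI)
    fix b assume b: "b < d"
    have "vinner K (\<lambda>k. U k b) (\<lambda>i. \<Sum>a<d. vinner K (\<lambda>k. U k a) z * U i a) = vinner K (\<lambda>k. U k b) z"
      by (rule orthonormal_coordinates[OF U dK b])
    then show "vinner K (\<lambda>k. U k b) r = 0"
      unfolding r_def vinner_def by (simp add: sum_subtractf algebra_simps)
  qed
qed

lemma subspace_extend_columns:
  assumes E: "ksubspace K E" and U: "kmat_unitary K U" and dK: "d < K"
    and UE: "\<forall>a<d. (\<lambda>i. U i a) \<in> E" and rE: "r \<in> E" and r0: "\<exists>i<K. r i \<noteq> 0"
    and rorth: "\<forall>a<d. vinner K (\<lambda>k. U k a) r = 0"
  shows "\<exists>U'. kmat_unitary K U' \<and> (\<forall>a<Suc d. (\<lambda>i. U' i a) \<in> E)"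
proof -
  from normalize_vec[OF r0] obtain c where r1: "vinner K (\<lambda>i. c * r i) (\<lambda>i. c * r i) = 1" by blast
  have orth: "\<forall>a<d. vinner K (\<lambda>i. U i a) (\<lambda>i. c * r i) = 0"
  proof (intro allI impI)
    fix a assume a: "a < d"
    have "vinner K (\<lambda>i. 1 * U i a) (\<lambda>i. c * r i) = cnj 1 * c * vinner K (\<lambda>i. U i a) r"
      by (rule vinner_scale)
    then show "vinner K (\<lambda>i. U i a) (\<lambda>i. c * r i) = 0" using rorth a by simp
  qed
  from extend_to_unitary[OF U dK r1 orth] obtain U' where U': "kmat_unitary K U'"
    and c1: "\<forall>a<d. \<forall>i<K. U' i a = U i a" and c2: "\<forall>i<K. U' i d = c * r i" by blast
  have "(\<lambda>i. U' i a) \<in> E" if a: "a < Suc d" for a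
  proof (cases "a = d")
    case True
    show ?thesis by (rule subspace_agree[OF E subspace_scale[OF E rE, of c]]) (use c2 True in auto)
  next
    case False
    with a have "a < d" by simp
    show ?thesis by (rule subspace_agree[OF E, of "\<lambda>i. U i a"]) (use UE c1 \<open>a < d\<close> in auto)
  qed
  then show ?thesis using U' by blast
qed

lemma subspace_onb:
  assumes E: "ksubspace K E" and v: "v \<in> E" "\<exists>i<K. v i \<noteq> 0"
  shows "\<exists>U d. kmat_unitary K U \<and> 0 < d \<and> d \<le> K \<and> (\<forall>a<d. (\<lambda>i. U i a) \<in> E)
     \<and> (\<forall>z\<in>E. \<forall>i<K. z i = (\<Sum>a<d. vinner K (\<lambda>k. U k a) z * U i a))"
proof -
  define P where "P d \<longleftrightarrow> d \<le> K \<and> (\<exists>U. kmat_unitary K U \<and> (\<forall>a<d. (\<lambda>i. U i a) \<in> E))" for d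
  have P0: "P 0" unfolding P_def using unitary_id by auto
  define d where "d = (GREATEST d. P d)"
  have bound: "\<forall>y. P y \<longrightarrow> y \<le> K" unfolding P_def by auto
  have Pd: "P d" unfolding d_def by (rule GreatestI_nat[of P 0 K, OF P0]) (use bound in auto)
  have dmax: "d' \<le> d" if "P d'" for d'
    unfolding d_def by (rule Greatest_le_nat[of P d' K, OF that]) (use bound in auto)
  from Pd obtain U where U: "kmat_unitary K U" and UE: "\<forall>a<d. (\<lambda>i. U i a) \<in> E" and dK: "d \<le> K"
    unfolding P_def by auto
  have span: "\<forall>z\<in>E. \<forall>i<K. z i = (\<Sum>a<d. vinner K (\<lambda>k. U k a) z * U i a)"
  proof (intro ballI allI impI, rule ccontr)
    fix z i assume zE: "z \<in> E" and i: "i < K" and ne: "z i \<noteq> (\<Sum>a<d. vinner K (\<lambda>k. U k a) z * U i a)"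
    define r where "r = (\<lambda>i. z i - (\<Sum>a<d. vinner K (\<lambda>k. U k a) z * U i a))"
    note res = subspace_residual[OF E U dK UE zE, folded r_def]
    have rne: "r i \<noteq> 0" using ne unfolding r_def by simp
    show False
    proof (cases "d = K")
      case True
      have "(\<Sum>a<K. vinner K (\<lambda>k. U k a) r * U i a) = r i" by (rule unitary_expansion[OF U i])
      then show False using res(2) True rne by simp
    next
      case False
      with dK have dK': "d < K" by simp
      have "\<exists>i<K. r i \<noteq> 0" using rne i by blast
      from subspace_extend_columns[OF E U dK' UE res(1) this res(2)]
      have "P (Suc d)" unfolding P_def using dK' by simp
      then show False using dmax by fastforce
    qed
  qed
  have "0 < d"
  proof (rule ccontr)
    assume "\<not> 0 < d"
    then show False using span v by auto
  qed
  then show ?thesis using U UE dK span by blast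
qed

text \<open>Compression of B to a B-invariant subspace with orthonormal basis given by the
  first d columns of U: an eigenvector y of the d x d compressed matrix C yields
  the eigenvector sum_b y_b U_b of B in the subspace.\<close>
lemma compression_eigenvector:
  assumes E: "ksubspace K E" and U: "kmat_unitary K U" and dK: "d \<le> K"
    and UE: "\<forall>a<d. (\<lambda>i. U i a) \<in> E"
    and span: "\<forall>z\<in>E. \<forall>i<K. z i = (\<Sum>a<d. vinner K (\<lambda>k. U k a) z * U i a)"
    and inv: "\<forall>x\<in>E. mvec K B x \<in> E"
  defines "C \<equiv> mat d d (\<lambda>(a,b). vinner K (\<lambda>k. U k a) (mvec K B (\<lambda>k. U k b)))"
  assumes y: "eigenvector C y \<mu>"
  shows "\<exists>x\<in>E. (\<exists>i<K. x i \<noteq> 0) \<and> (\<forall>i<K. mvec K B x i = \<mu> * x i)"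
proof -
  have Cc: "C \<in> carrier_mat d d" unfolding C_def by simp
  then have yc: "y \<in> carrier_vec d" and y0: "y \<noteq> 0\<^sub>v d" and Cy: "C *\<^sub>v y = \<mu> \<cdot>\<^sub>v y"
    using y unfolding eigenvector_def by auto
  define x where "x = (\<lambda>i. \<Sum>b<d. (y $ b) * U i b)"
  have xE: "x \<in> E" unfolding x_def
    by (rule subspace_lincomb[OF E, where u="\<lambda>a i. U i a"]) (use UE in auto)
  have coord: "vinner K (\<lambda>k. U k a) x = y $ a" if a: "a < d" for a
    unfolding x_def by (rule orthonormal_coordinates[OF U dK a])
  have xne: "\<exists>i<K. x i \<noteq> 0"
  proof (rule ccontr)
    assume "\<not> (\<exists>i<K. x i \<noteq> 0)"
    then have "vinner K (\<lambda>k. U k a) x = 0" for a unfolding vinner_def by simp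
    then have "\<forall>a<d. y $ a = 0" using coord by metis
    then have "y = 0\<^sub>v d" using yc by (intro eq_vecI) auto
    then show False using y0 by simp
  qed
  have Cy_entry: "(\<Sum>b<d. C $$ (a,b) * y $ b) = \<mu> * y $ a" if a: "a < d" for a
  proof -
    have "(C *\<^sub>v y) $ a = (\<mu> \<cdot>\<^sub>v y) $ a" using Cy by simp
    then show ?thesis using a yc Cc by (simp add: scalar_prod_def atLeast0LessThan)
  qed
  have Bx: "mvec K B x i = \<mu> * x i" if i: "i < K" for i
  proof -
    have colB: "mvec K B (\<lambda>k. U k b) i = (\<Sum>a<d. C $$ (a,b) * U i a)" if b: "b < d" for b
    proof -
      have "mvec K B (\<lambda>k. U k b) \<in> E" using inv UE b by auto
      then have "mvec K B (\<lambda>k. U k b) i = (\<Sum>a<d. vinner K (\<lambda>k. U k a) (mvec K B (\<lambda>k. U k b)) * U i a)"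
        using span i by blast
      also have "\<dots> = (\<Sum>a<d. C $$ (a,b) * U i a)"
        unfolding C_def using b by (intro sum.cong refl) auto
      finally show ?thesis .
    qed
    have "mvec K B x i = (\<Sum>b<d. (y $ b) * mvec K B (\<lambda>k. U k b) i)"
      unfolding x_def by (rule mvec_lincomb)
    also have "\<dots> = (\<Sum>b<d. \<Sum>a<d. (y $ b) * (C $$ (a,b) * U i a))"
      using colB by (simp add: sum_distrib_left)
    also have "\<dots> = (\<Sum>a<d. \<Sum>b<d. (y $ b) * (C $$ (a,b) * U i a))" by (rule sum.swap)
    also have "\<dots> = (\<Sum>a<d. (\<Sum>b<d. C $$ (a,b) * y $ b) * U i a)"
      by (simp add: sum_distrib_right sum_distrib_left algebra_simps)
    also have "\<dots> = (\<Sum>a<d. (\<mu> * y $ a) * U i a)" using Cy_entry by simp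
    also have "\<dots> = \<mu> * x i" unfolding x_def by (simp add: sum_distrib_left algebra_simps)
    finally show ?thesis .
  qed
  show ?thesis using xE xne Bx by blast
qed

text \<open>A matrix leaving a nonzero subspace invariant has an eigenvector in it: the
  compressed matrix has an eigenvalue, the complex numbers being algebraically closed.\<close>
lemma invariant_subspace_eigenvector:
  assumes E: "ksubspace K E" and v: "v \<in> E" "\<exists>i<K. v i \<noteq> 0"
    and inv: "\<forall>x\<in>E. mvec K B x \<in> E"
  shows "\<exists>x\<in>E. (\<exists>i<K. x i \<noteq> 0) \<and> (\<exists>\<mu>. \<forall>i<K. mvec K B x i = \<mu> * x i)"
proof -
  from subspace_onb[OF E v] obtain U d where U: "kmat_unitary K U" and d0: "0 < d" and dK: "d \<le> K"
    and UE: "\<forall>a<d. (\<lambda>i. U i a) \<in> E"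
    and span: "\<forall>z\<in>E. \<forall>i<K. z i = (\<Sum>a<d. vinner K (\<lambda>k. U k a) z * U i a)" by blast
  define C where "C = mat d d (\<lambda>(a,b). vinner K (\<lambda>k. U k a) (mvec K B (\<lambda>k. U k b)))"
  have Cc: "C \<in> carrier_mat d d" unfolding C_def by simp
  from char_poly_factorized[OF Cc] obtain as where cp: "char_poly C = (\<Prod>a\<leftarrow>as. [:- a, 1:])"
    and las: "length as = d" by blast
  then obtain \<mu> rest where as: "as = \<mu> # rest" using d0 by (cases as) auto
  have "poly (char_poly C) \<mu> = 0" unfolding cp as by simp
  then have "eigenvalue C \<mu>" using eigenvalue_root_char_poly[OF Cc] by simp
  then obtain y where "eigenvector C y \<mu>" unfolding eigenvalue_def by blast
  from compression_eigenvector[OF E U dK UE span inv this[unfolded C_def]] show ?thesis by blast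
qed

definition joint_eigenspace :: "nat \<Rightarrow> (nat \<Rightarrow> nat \<Rightarrow> complex) set \<Rightarrow> ((nat \<Rightarrow> nat \<Rightarrow> complex) \<Rightarrow> complex)
    \<Rightarrow> (nat \<Rightarrow> complex) set" where
  "joint_eigenspace K F lam = {x. \<forall>A\<in>F. \<forall>i<K. mvec K A x i = lam A * x i}"

lemma joint_eigenspace_subspace: "ksubspace K (joint_eigenspace K F lam)"
proof -
  have "(\<lambda>i. \<alpha> * x i + y i) \<in> joint_eigenspace K F lam"
    if "x \<in> joint_eigenspace K F lam" "y \<in> joint_eigenspace K F lam" for x y \<alpha>
    using that unfolding joint_eigenspace_def mem_Collect_eq mvec_add_scaled
    by (simp add: algebra_simps)
  moreover have "y \<in> joint_eigenspace K F lam"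
    if "x \<in> joint_eigenspace K F lam" "\<forall>i<K. x i = y i" for x y
  proof -
    have "mvec K A x i = mvec K A y i" for A i using that(2) by (intro mvec_cong) auto
    then show ?thesis using that unfolding joint_eigenspace_def by auto
  qed
  ultimately show ?thesis
    unfolding ksubspace_def by (auto simp: joint_eigenspace_def mvec_zero)
qed

lemma joint_eigenspace_invariant:
  assumes comm: "\<forall>A\<in>F. kmat_commute K A B" and xE: "x \<in> joint_eigenspace K F lam"
  shows "mvec K B x \<in> joint_eigenspace K F lam"
  unfolding joint_eigenspace_def
proof (intro CollectI ballI allI impI)
  fix A i assume A: "A \<in> F" and i: "i < K"
  have "mvec K A (mvec K B x) i = mvec K (kmat_mult K A B) x i" by (rule mvec_mult[symmetric])
  also have "\<dots> = mvec K (kmat_mult K B A) x i"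
    using comm A i unfolding kmat_commute_def by (intro mvec_mat_cong) auto
  also have "\<dots> = mvec K B (mvec K A x) i" by (rule mvec_mult)
  also have "\<dots> = mvec K B (\<lambda>i. lam A * x i) i"
    using xE A unfolding joint_eigenspace_def by (intro mvec_cong) auto
  also have "\<dots> = lam A * mvec K B x i" by (rule mvec_scale)
  finally show "mvec K A (mvec K B x) i = lam A * mvec K B x i" .
qed

lemma common_eigenvector:
  assumes "finite F" "0 < K" "\<forall>A\<in>F. \<forall>B\<in>F. kmat_commute K A B"
  shows "\<exists>v. (\<exists>i<K. v i \<noteq> 0) \<and> (\<forall>A\<in>F. \<exists>l. \<forall>i<K. mvec K A v i = l * v i)"
  using assms(1,3)
proof (induction F rule: finite_induct)
  case empty
  show ?case using assms(2) by (intro exI[of _ "\<lambda>i. if i = 0 then 1 else 0"]) auto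
next
  case (insert B F)
  then obtain v where v0: "\<exists>i<K. v i \<noteq> 0"
    and vF: "\<forall>A\<in>F. \<exists>l. \<forall>i<K. mvec K A v i = l * v i" by auto
  from bchoice[OF vF] obtain lam where "\<forall>A\<in>F. \<forall>i<K. mvec K A v i = lam A * v i" by blast
  then have vE: "v \<in> joint_eigenspace K F lam" unfolding joint_eigenspace_def by blast
  have "\<forall>x\<in>joint_eigenspace K F lam. mvec K B x \<in> joint_eigenspace K F lam"
    using joint_eigenspace_invariant insert.prems by blast
  from invariant_subspace_eigenvector[OF joint_eigenspace_subspace vE v0 this]
  obtain x where xE: "x \<in> joint_eigenspace K F lam" and x0: "\<exists>i<K. x i \<noteq> 0"
    and xB: "\<exists>\<mu>. \<forall>i<K. mvec K B x i = \<mu> * x i" by blast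
  have "\<forall>A\<in>insert B F. \<exists>l. \<forall>i<K. mvec K A x i = l * x i"
    using xE xB unfolding joint_eigenspace_def by auto
  then show ?case using x0 by blast
qed

section \<open>Simultaneous unitary diagonalization\<close>

definition kmat_conj :: "nat \<Rightarrow> (nat \<Rightarrow> nat \<Rightarrow> complex) \<Rightarrow> (nat \<Rightarrow> nat \<Rightarrow> complex) \<Rightarrow> nat \<Rightarrow> nat \<Rightarrow> complex" where
  "kmat_conj K U A = kmat_mult K (kmat_adjoint U) (kmat_mult K A U)"

definition kmat_diagonal :: "nat \<Rightarrow> (nat \<Rightarrow> nat \<Rightarrow> complex) \<Rightarrow> bool" where
  "kmat_diagonal K X \<longleftrightarrow> (\<forall>a<K. \<forall>b<K. a \<noteq> b \<longrightarrow> X a b = 0)"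

lemma conj_mult:
  assumes U: "kmat_unitary K U" and i: "i < K"
  shows "kmat_mult K (kmat_conj K U A) (kmat_conj K U B) i k = kmat_conj K U (kmat_mult K A B) i k"
proof -
  have e1: "kmat_mult K (kmat_conj K U A) (kmat_conj K U B)
     = kmat_mult K (kmat_adjoint U) (kmat_mult K A (kmat_mult K (kmat_mult K U (kmat_adjoint U)) (kmat_mult K B U)))"
    unfolding kmat_conj_def by (simp add: kmat_mult_assoc)
  have "\<forall>j<K. kmat_mult K A (kmat_mult K (kmat_mult K U (kmat_adjoint U)) (kmat_mult K B U)) j k
      = kmat_mult K A (kmat_mult K B U) j k"
    using unitary_right_inverse[OF U] by (intro allI impI kmat_mult_cong_right) auto
  then have "kmat_mult K (kmat_conj K U A) (kmat_conj K U B) i k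
      = kmat_mult K (kmat_adjoint U) (kmat_mult K A (kmat_mult K B U)) i k"
    unfolding e1 by (rule kmat_mult_cong_right)
  also have "\<dots> = kmat_conj K U (kmat_mult K A B) i k" unfolding kmat_conj_def by (simp add: kmat_mult_assoc)
  finally show ?thesis .
qed

lemma conj_adjoint: "kmat_adjoint (kmat_conj K U A) = kmat_conj K U (kmat_adjoint A)"
  unfolding kmat_conj_def by (simp add: kmat_adjoint_mult kmat_adjoint_adjoint kmat_mult_assoc)

lemma conj_cong: "\<forall>i<K. \<forall>j<K. X i j = Y i j \<Longrightarrow> kmat_conj K U X i k = kmat_conj K U Y i k"
  unfolding kmat_conj_def by (intro kmat_mult_cong_right allI impI kmat_mult_cong_left) auto

lemma conj_mult_unitary: "kmat_conj K (kmat_mult K U V) A = kmat_conj K V (kmat_conj K U A)"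
  unfolding kmat_conj_def by (simp add: kmat_adjoint_mult kmat_mult_assoc)

lemma conj_normal:
  assumes U: "kmat_unitary K U" and N: "kmat_normal K A"
  shows "kmat_normal K (kmat_conj K U A)"
  unfolding kmat_normal_def
proof (intro allI impI)
  fix i k assume i: "i < K" and k: "k < K"
  have "kmat_mult K (kmat_conj K U A) (kmat_adjoint (kmat_conj K U A)) i k
      = kmat_conj K U (kmat_mult K A (kmat_adjoint A)) i k"
    unfolding conj_adjoint by (rule conj_mult[OF U i])
  also have "\<dots> = kmat_conj K U (kmat_mult K (kmat_adjoint A) A) i k"
    using N unfolding kmat_normal_def by (intro conj_cong) simp
  also have "\<dots> = kmat_mult K (kmat_adjoint (kmat_conj K U A)) (kmat_conj K U A) i k"
    unfolding conj_adjoint by (rule conj_mult[OF U i, symmetric])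
  finally show "kmat_mult K (kmat_conj K U A) (kmat_adjoint (kmat_conj K U A)) i k
      = kmat_mult K (kmat_adjoint (kmat_conj K U A)) (kmat_conj K U A) i k" .
qed

lemma conj_commute:
  assumes U: "kmat_unitary K U" and C: "kmat_commute K A B"
  shows "kmat_commute K (kmat_conj K U A) (kmat_conj K U B)"
  unfolding kmat_commute_def
proof (intro allI impI)
  fix i k assume i: "i < K" and k: "k < K"
  have "kmat_mult K (kmat_conj K U A) (kmat_conj K U B) i k = kmat_conj K U (kmat_mult K A B) i k"
    by (rule conj_mult[OF U i])
  also have "\<dots> = kmat_conj K U (kmat_mult K B A) i k"
    using C unfolding kmat_commute_def by (intro conj_cong) simp
  also have "\<dots> = kmat_mult K (kmat_conj K U B) (kmat_conj K U A) i k" by (rule conj_mult[OF U i, symmetric])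
  finally show "kmat_mult K (kmat_conj K U A) (kmat_conj K U B) i k
      = kmat_mult K (kmat_conj K U B) (kmat_conj K U A) i k" .
qed

lemma conj_mvec:
  assumes W: "kmat_unitary K W" and l: "l < K"
  shows "mvec K (kmat_conj K (kmat_adjoint W) X) (mvec K W y) l = mvec K W (mvec K X y) l"
proof -
  have "mvec K (kmat_conj K (kmat_adjoint W) X) (mvec K W y) l
      = mvec K W (mvec K (kmat_mult K X (kmat_adjoint W)) (mvec K W y)) l"
    unfolding kmat_conj_def kmat_adjoint_adjoint by (rule mvec_mult)
  also have "\<dots> = mvec K W (mvec K X y) l"
  proof (rule mvec_cong, intro allI impI)
    fix j assume "j < K"
    have "mvec K (kmat_mult K X (kmat_adjoint W)) (mvec K W y) j
        = mvec K X (mvec K (kmat_adjoint W) (mvec K W y)) j"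
      by (rule mvec_mult)
    also have "\<dots> = mvec K X y j" using unitary_adjoint_mvec[OF W] by (intro mvec_cong) auto
    finally show "mvec K (kmat_mult K X (kmat_adjoint W)) (mvec K W y) j = mvec K X y j" .
  qed
  finally show ?thesis .
qed

lemma conj_eigencolumn:
  assumes U: "kmat_unitary K U" and col: "\<forall>i<K. U i 0 = v i"
    and Av: "\<forall>i<K. mvec K A v i = lam * v i" and a: "a < K"
  shows "kmat_conj K U A a 0 = (if a = 0 then lam else 0)"
proof -
  have AU: "kmat_mult K A U j 0 = lam * U j 0" if j: "j < K" for j
  proof -
    have "kmat_mult K A U j 0 = mvec K A v j"
      unfolding kmat_mult_def mvec_def using col by (intro sum.cong) auto
    then show ?thesis using Av col j by simp
  qed
  have "kmat_conj K U A a 0 = (\<Sum>j<K. cnj (U j a) * kmat_mult K A U j 0)"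
    by (simp add: kmat_conj_def kmat_mult_def kmat_adjoint_def)
  also have "\<dots> = lam * (\<Sum>j<K. cnj (U j a) * U j 0)"
    using AU by (simp add: sum_distrib_left algebra_simps)
  also have "\<dots> = lam * (if a = 0 then 1 else 0)"
    using U a unfolding kmat_unitary_def by simp
  finally show ?thesis by simp
qed

text \<open>A normal matrix whose first column is lam e_0 also has first row lam e_0:
  compare the (0,0) entries of B B^dagger and B^dagger B.\<close>
lemma normal_first_row:
  assumes N: "kmat_normal (Suc K) B" and col: "\<forall>a<Suc K. B a 0 = (if a = 0 then lam else 0)"
    and b: "b < K"
  shows "B 0 (Suc b) = 0"
proof -
  have "kmat_mult (Suc K) B (kmat_adjoint B) 0 0 = kmat_mult (Suc K) (kmat_adjoint B) B 0 0"
    using N unfolding kmat_normal_def by auto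
  moreover have "kmat_mult (Suc K) B (kmat_adjoint B) 0 0 = (\<Sum>j<Suc K. complex_of_real ((cmod (B 0 j))^2))"
    unfolding kmat_mult_def kmat_adjoint_def
    by (rule sum.cong) (simp_all add: complex_norm_square del: of_real_power)
  moreover have "kmat_mult (Suc K) (kmat_adjoint B) B 0 0 = (\<Sum>j<Suc K. if j = 0 then cnj lam * lam else 0)"
    unfolding kmat_mult_def kmat_adjoint_def using col by (intro sum.cong refl) auto
  ultimately have "(\<Sum>j<Suc K. complex_of_real ((cmod (B 0 j))^2)) = complex_of_real ((cmod lam)^2)"
    by (simp add: complex_norm_square mult.commute del: of_real_power)
  moreover have "B 0 0 = lam" using col by simp
  ultimately have "complex_of_real (\<Sum>j<K. (cmod (B 0 (Suc j)))^2) = 0"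
    by (simp add: sum.lessThan_Suc_shift of_real_sum del: of_real_power sum.lessThan_Suc)
  then have "(\<Sum>j<K. (cmod (B 0 (Suc j)))^2) = 0" by (simp only: of_real_eq_0_iff)
  then have "(cmod (B 0 (Suc b)))^2 = 0" using b by (simp add: sum_nonneg_eq_0_iff)
  then show ?thesis by simp
qed

definition kmat_lower :: "(nat \<Rightarrow> nat \<Rightarrow> complex) \<Rightarrow> nat \<Rightarrow> nat \<Rightarrow> complex" where
  "kmat_lower X = (\<lambda>a b. X (Suc a) (Suc b))"

lemma mult_lower:
  assumes "X (Suc a) 0 * Y 0 (Suc k) = 0"
  shows "kmat_mult (Suc K) X Y (Suc a) (Suc k) = kmat_mult K (kmat_lower X) (kmat_lower Y) a k"
  using assms unfolding kmat_mult_def kmat_lower_def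
  by (simp add: sum.lessThan_Suc_shift del: sum.lessThan_Suc)

lemma lower_adjoint: "kmat_adjoint (kmat_lower X) = kmat_lower (kmat_adjoint X)"
  unfolding kmat_adjoint_def kmat_lower_def ..

lemma lower_normal:
  assumes N: "kmat_normal (Suc K) B"
    and col: "\<forall>a<K. B (Suc a) 0 = 0" and row: "\<forall>b<K. B 0 (Suc b) = 0"
  shows "kmat_normal K (kmat_lower B)"
  unfolding kmat_normal_def lower_adjoint
proof (intro allI impI)
  fix a k assume a: "a < K" and k: "k < K"
  have "kmat_mult K (kmat_lower B) (kmat_lower (kmat_adjoint B)) a k
      = kmat_mult (Suc K) B (kmat_adjoint B) (Suc a) (Suc k)"
    by (rule mult_lower[symmetric]) (simp add: kmat_adjoint_def col a)
  also have "\<dots> = kmat_mult (Suc K) (kmat_adjoint B) B (Suc a) (Suc k)"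
    using N a k unfolding kmat_normal_def by auto
  also have "\<dots> = kmat_mult K (kmat_lower (kmat_adjoint B)) (kmat_lower B) a k"
    by (rule mult_lower) (simp add: kmat_adjoint_def row a)
  finally show "kmat_mult K (kmat_lower B) (kmat_lower (kmat_adjoint B)) a k
      = kmat_mult K (kmat_lower (kmat_adjoint B)) (kmat_lower B) a k" .
qed

lemma lower_commute:
  assumes C: "kmat_commute (Suc K) B C"
    and colB: "\<forall>a<K. B (Suc a) 0 = 0" and colC: "\<forall>a<K. C (Suc a) 0 = 0"
  shows "kmat_commute K (kmat_lower B) (kmat_lower C)"
  unfolding kmat_commute_def
proof (intro allI impI)
  fix a k assume a: "a < K" and k: "k < K"
  have "kmat_mult K (kmat_lower B) (kmat_lower C) a k = kmat_mult (Suc K) B C (Suc a) (Suc k)"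
    by (rule mult_lower[symmetric]) (simp add: colB a)
  also have "\<dots> = kmat_mult (Suc K) C B (Suc a) (Suc k)"
    using C a k unfolding kmat_commute_def by auto
  also have "\<dots> = kmat_mult K (kmat_lower C) (kmat_lower B) a k"
    by (rule mult_lower) (simp add: colC a)
  finally show "kmat_mult K (kmat_lower B) (kmat_lower C) a k = kmat_mult K (kmat_lower C) (kmat_lower B) a k" .
qed

definition kmat_block :: "(nat \<Rightarrow> nat \<Rightarrow> complex) \<Rightarrow> nat \<Rightarrow> nat \<Rightarrow> complex" where
  "kmat_block V = (\<lambda>a b. if a = 0 then (if b = 0 then 1 else 0) else if b = 0 then 0 else V (a - 1) (b - 1))"

lemma block_unitary:
  assumes V: "kmat_unitary K V"
  shows "kmat_unitary (Suc K) (kmat_block V)"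
  unfolding kmat_unitary_def
proof (intro allI impI)
  fix a b assume a: "a < Suc K" and b: "b < Suc K"
  show "(\<Sum>k<Suc K. cnj (kmat_block V k a) * kmat_block V k b) = (if a = b then 1 else 0)"
  proof (cases a)
    case 0
    then show ?thesis
      by (cases b) (simp_all add: kmat_block_def sum.lessThan_Suc_shift del: sum.lessThan_Suc)
  next
    case (Suc a')
    then show ?thesis
      using a b V unfolding kmat_unitary_def
      by (cases b) (simp_all add: kmat_block_def sum.lessThan_Suc_shift del: sum.lessThan_Suc)
  qed
qed

lemma conj_block:
  shows "kmat_conj (Suc K) (kmat_block V) X (Suc a) (Suc b) = kmat_conj K V (kmat_lower X) a b"
    and "kmat_conj (Suc K) (kmat_block V) X 0 (Suc b) = (\<Sum>l<K. X 0 (Suc l) * V l b)"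
    and "kmat_conj (Suc K) (kmat_block V) X (Suc a) 0 = (\<Sum>j<K. cnj (V j a) * X (Suc j) 0)"
  unfolding kmat_conj_def kmat_mult_def kmat_adjoint_def kmat_block_def kmat_lower_def
  by (simp_all add: sum.lessThan_Suc_shift del: sum.lessThan_Suc)

lemma conj_block_diagonal:
  assumes col: "\<forall>a<K. B (Suc a) 0 = 0" and row: "\<forall>b<K. B 0 (Suc b) = 0"
    and D: "kmat_diagonal K (kmat_conj K V (kmat_lower B))"
  shows "kmat_diagonal (Suc K) (kmat_conj (Suc K) (kmat_block V) B)"
  unfolding kmat_diagonal_def
proof (intro allI impI)
  fix a b assume a: "a < Suc K" and b: "b < Suc K" and ab: "a \<noteq> b"
  show "kmat_conj (Suc K) (kmat_block V) B a b = 0"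
  proof (cases a)
    case 0
    with ab obtain b' where "b = Suc b'" by (cases b) auto
    then show ?thesis using 0 row by (simp add: conj_block(2))
  next
    case (Suc a')
    show ?thesis
    proof (cases b)
      case 0
      then show ?thesis using Suc col by (simp add: conj_block(3))
    next
      case (Suc b')
      then show ?thesis using \<open>a = Suc a'\<close> a b ab D
        by (simp add: conj_block(1) kmat_diagonal_def)
    qed
  qed
qed

text \<open>A finite commuting family of normal matrices can be brought simultaneously into
  block form diag(lam, B') by one unitary: complete a unit common eigenvector to a
  unitary U; then U^dagger A U has first column lam e_0, and by normality first row
  lam e_0 as well.\<close>
lemma common_deflation:
  assumes F: "finite F" and N: "\<forall>A\<in>F. kmat_normal (Suc K) A"
    and C: "\<forall>A\<in>F. \<forall>B\<in>F. kmat_commute (Suc K) A B"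
  shows "\<exists>U. kmat_unitary (Suc K) U \<and> (\<forall>A\<in>F. (\<forall>a<K. kmat_conj (Suc K) U A (Suc a) 0 = 0)
                                         \<and> (\<forall>b<K. kmat_conj (Suc K) U A 0 (Suc b) = 0))"
proof -
  have "0 < Suc K" by simp
  from common_eigenvector[OF F this C] obtain v where v0: "\<exists>i<Suc K. v i \<noteq> 0"
    and vF: "\<forall>A\<in>F. \<exists>l. \<forall>i<Suc K. mvec (Suc K) A v i = l * v i" by blast
  from bchoice[OF vF] obtain lam where lam: "\<forall>A\<in>F. \<forall>i<Suc K. mvec (Suc K) A v i = lam A * v i"
    by blast
  from normalize_vec[OF v0] obtain c where v1: "vinner (Suc K) (\<lambda>i. c * v i) (\<lambda>i. c * v i) = 1"
    by blast
  from extend_to_unitary[where d=0, OF unitary_id _ v1]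
  obtain U where U: "kmat_unitary (Suc K) U" and U0: "\<forall>i<Suc K. U i 0 = c * v i" by auto
  have col: "\<forall>a<Suc K. kmat_conj (Suc K) U A a 0 = (if a = 0 then lam A else 0)" if A: "A \<in> F" for A
  proof (intro allI impI)
    fix a assume a: "a < Suc K"
    have "\<forall>i<Suc K. mvec (Suc K) A (\<lambda>i. c * v i) i = lam A * (c * v i)"
      using lam A by (simp add: mvec_scale)
    from conj_eigencolumn[OF U U0 this a]
    show "kmat_conj (Suc K) U A a 0 = (if a = 0 then lam A else 0)" .
  qed
  have "\<forall>b<K. kmat_conj (Suc K) U A 0 (Suc b) = 0" if A: "A \<in> F" for A
  proof -
    have "kmat_normal (Suc K) (kmat_conj (Suc K) U A)" by (rule conj_normal[OF U]) (use N A in blast)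
    from normal_first_row[OF this col[OF A]] show ?thesis by blast
  qed
  moreover have "\<forall>a<K. kmat_conj (Suc K) U A (Suc a) 0 = 0" if A: "A \<in> F" for A
    using col[OF A] by simp
  ultimately show ?thesis using U by blast
qed

text \<open>Induction on K: after the common deflation step the
  lower blocks form a smaller commuting normal family.\<close>
lemma simultaneous_diagonalization:
  assumes "finite F" "\<forall>A\<in>F. kmat_normal K A" "\<forall>A\<in>F. \<forall>B\<in>F. kmat_commute K A B"
  shows "\<exists>U. kmat_unitary K U \<and> (\<forall>A\<in>F. kmat_diagonal K (kmat_conj K U A))"
  using assms
proof (induction K arbitrary: F)
  case 0
  then show ?case by (auto simp: kmat_unitary_def kmat_diagonal_def)
next
  case (Suc K F)
  from common_deflation[OF Suc.prems] obtain U where U: "kmat_unitary (Suc K) U"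
    and blk: "\<forall>A\<in>F. (\<forall>a<K. kmat_conj (Suc K) U A (Suc a) 0 = 0)
                   \<and> (\<forall>b<K. kmat_conj (Suc K) U A 0 (Suc b) = 0)" by blast
  define B where "B = (\<lambda>A. kmat_conj (Suc K) U A)"
  let ?G = "kmat_lower ` B ` F"
  have "\<forall>A'\<in>?G. kmat_normal K A'"
  proof
    fix A' assume "A' \<in> ?G"
    then obtain A where A: "A \<in> F" and "A' = kmat_lower (B A)" by blast
    moreover have "kmat_normal (Suc K) (B A)"
      unfolding B_def by (rule conj_normal[OF U]) (use Suc.prems(2) A in blast)
    ultimately show "kmat_normal K A'" using lower_normal blk unfolding B_def by blast
  qed
  moreover have "\<forall>A'\<in>?G. \<forall>C'\<in>?G. kmat_commute K A' C'"
  proof (intro ballI)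
    fix A' C' assume "A' \<in> ?G" "C' \<in> ?G"
    then obtain A C where A: "A \<in> F" "A' = kmat_lower (B A)" and C: "C \<in> F" "C' = kmat_lower (B C)"
      by blast
    have "kmat_commute (Suc K) (B A) (B C)"
      unfolding B_def by (rule conj_commute[OF U]) (use Suc.prems(3) A C in blast)
    then show "kmat_commute K A' C'" using lower_commute blk A C unfolding B_def by blast
  qed
  moreover have "finite ?G" using Suc.prems(1) by simp
  ultimately obtain V where V: "kmat_unitary K V"
    and DV: "\<forall>A'\<in>?G. kmat_diagonal K (kmat_conj K V A')"
    using Suc.IH[of ?G] by blast
  have "kmat_diagonal (Suc K) (kmat_conj (Suc K) (kmat_mult (Suc K) U (kmat_block V)) A)"
    if A: "A \<in> F" for A
    unfolding conj_mult_unitary using conj_block_diagonal blk DV A unfolding B_def by blast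
  then show ?case using unitary_mult[OF U block_unitary[OF V]] by blast
qed

section \<open>Decompositions of a state\<close>

text \<open>The vectors (Phi_l(i,j))_l, indexed by the
  product basis, have the same Gram matrix rho^T in both decompositions.\<close>
lemma decomp_unitary_freedom:
  assumes D1: "is_decomp M N K \<rho> \<Phi>" and D2: "is_decomp M N K \<rho> \<Phi>'"
  shows "\<exists>U. kmat_unitary K U \<and> (\<forall>l<K. \<forall>i<M. \<forall>j<N. \<Phi>' l i j = (\<Sum>k<K. U l k * \<Phi> k i j))"
proof -
  define a where "a = (\<lambda>p l. \<Phi> l (fst p) (snd p))"
  define b where "b = (\<lambda>p l. \<Phi>' l (fst p) (snd p))"
  have g: "\<forall>p\<in>{..<M} \<times> {..<N}. \<forall>q\<in>{..<M} \<times> {..<N}. vinner K (a p) (a q) = vinner K (b p) (b q)"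
  proof (intro ballI)
    fix p q assume p: "p \<in> {..<M} \<times> {..<N}" and q: "q \<in> {..<M} \<times> {..<N}"
    have "vinner K (a p) (a q) = cnj (\<rho> (fst p) (snd p) (fst q) (snd q))"
      using D1 p q unfolding is_decomp_def a_def vinner_def by (auto simp: cnj_sum mult.commute)
    also have "\<dots> = vinner K (b p) (b q)"
      using D2 p q unfolding is_decomp_def b_def vinner_def by (auto simp: cnj_sum mult.commute)
    finally show "vinner K (a p) (a q) = vinner K (b p) (b q)" .
  qed
  from gram_equal_unitary[OF _ g] obtain U where U: "kmat_unitary K U"
    and e: "\<forall>p\<in>{..<M} \<times> {..<N}. \<forall>l<K. mvec K U (a p) l = b p l" by blast
  have "\<Phi>' l i j = (\<Sum>k<K. U l k * \<Phi> k i j)" if "l < K" "i < M" "j < N" for l i j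
    using e that unfolding mvec_def a_def b_def by auto
  then show ?thesis using U by blast
qed

lemma unitary_transpose:
  assumes "kmat_unitary K W"
  shows "kmat_unitary K (\<lambda>a b. W b a)"
  using unitary_adjoint[OF unitary_cnj[OF assms]] unfolding kmat_adjoint_def by simp

lemma mix_decomp:
  assumes W: "kmat_unitary K W" and D: "is_decomp M N K \<rho> \<Phi>"
  shows "is_decomp M N K \<rho> (\<lambda>l i j. \<Sum>k<K. W l k * \<Phi> k i j)"
  unfolding is_decomp_def
proof (intro allI impI)
  fix i j i' j' assume i: "i < M" and j: "j < N" and i': "i' < M" and j': "j' < N"
  have "(\<Sum>l<K. (\<Sum>k<K. W l k * \<Phi> k i j) * cnj (\<Sum>k<K. W l k * \<Phi> k i' j'))
      = (\<Sum>l<K. \<Sum>k<K. \<Sum>k'<K. (W l k * cnj (W l k')) * (\<Phi> k i j * cnj (\<Phi> k' i' j')))"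
    by (intro sum.cong refl) (simp add: cnj_sum sum_product algebra_simps)
  also have "\<dots> = (\<Sum>k<K. \<Sum>k'<K. \<Sum>l<K. (W l k * cnj (W l k')) * (\<Phi> k i j * cnj (\<Phi> k' i' j')))"
    by (rule sum_swap3)
  also have "\<dots> = (\<Sum>k<K. \<Sum>k'<K. (if k = k' then 1 else 0) * (\<Phi> k i j * cnj (\<Phi> k' i' j')))"
  proof (intro sum.cong refl)
    fix k k' assume "k \<in> {..<K}" "k' \<in> {..<K}"
    then have "(\<Sum>l<K. cnj (W l k') * W l k) = (if k' = k then 1 else 0)"
      using W unfolding kmat_unitary_def by simp
    then have "(\<Sum>l<K. W l k * cnj (W l k')) = (if k = k' then 1 else 0)"
      by (simp add: mult.commute eq_commute)
    then show "(\<Sum>l<K. (W l k * cnj (W l k')) * (\<Phi> k i j * cnj (\<Phi> k' i' j')))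
        = (if k = k' then 1 else 0) * (\<Phi> k i j * cnj (\<Phi> k' i' j'))"
      by (simp add: sum_distrib_right[symmetric])
  qed
  also have "\<dots> = (\<Sum>k<K. \<Phi> k i j * cnj (\<Phi> k i' j'))"
    by (intro sum.cong refl) (simp add: sum_kronecker(1))
  also have "\<dots> = \<rho> i j i' j'" using D i j i' j' unfolding is_decomp_def by simp
  finally show "\<rho> i j i' j' = (\<Sum>l<K. (\<Sum>k<K. W l k * \<Phi> k i j) * cnj (\<Sum>k<K. W l k * \<Phi> k i' j'))"
    by simp
qed

lemma decomp_cong:
  assumes "\<forall>l<K. \<forall>i<M. \<forall>j<N. \<Phi> l i j = \<Psi> l i j" "is_decomp M N K \<rho> \<Phi>"
  shows "is_decomp M N K \<rho> \<Psi>"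
  using assms unfolding is_decomp_def by (auto intro!: sum.cong)

lemma gram_vec_mix:
  assumes "\<forall>l<K. \<forall>i<M. \<forall>j<N. \<Phi>' l i j = (\<Sum>k<K. W l k * \<Phi> k i j)" and l: "l < K"
  shows "gram_vec M N \<Phi>' e f l m n = mvec K (\<lambda>l k. cnj (W l k)) (\<lambda>k. gram_vec M N \<Phi> e f k m n) l"
proof -
  have "gram_vec M N \<Phi>' e f l m n
      = (\<Sum>i<M. \<Sum>j<N. \<Sum>k<K. cnj (W l k) * (cnj (\<Phi> k i j) * e m i * f n j))"
    unfolding gram_vec_def using assms
    by (intro sum.cong refl) (simp add: cnj_sum sum_distrib_right sum_distrib_left algebra_simps)
  also have "\<dots> = (\<Sum>k<K. \<Sum>i<M. \<Sum>j<N. cnj (W l k) * (cnj (\<Phi> k i j) * e m i * f n j))"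
    by (rule sum_swap3[symmetric])
  also have "\<dots> = mvec K (\<lambda>l k. cnj (W l k)) (\<lambda>k. gram_vec M N \<Phi> e f k m n) l"
    unfolding gram_vec_def mvec_def by (simp add: sum_distrib_left)
  finally show ?thesis .
qed

lemma intertwining_mix:
  assumes W: "kmat_unitary K W"
    and rel: "\<forall>l<K. \<forall>i<M. \<forall>j<N. \<Phi>' l i j = (\<Sum>k<K. W l k * \<Phi> k i j)"
    and R: "\<forall>l<K. mvec K X (\<lambda>j. gram_vec M N \<Phi> e f j k n) l = gram_vec M N \<Phi> e f l m n"
    and l: "l < K"
  shows "mvec K (kmat_conj K (\<lambda>a b. W b a) X) (\<lambda>j. gram_vec M N \<Phi>' e f j k n) l
       = gram_vec M N \<Phi>' e f l m n"
proof -
  define V where "V = (\<lambda>l k. cnj (W l k))"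
  have V: "kmat_unitary K V" unfolding V_def by (rule unitary_cnj[OF W])
  have adjV: "kmat_adjoint V = (\<lambda>a b. W b a)" unfolding V_def kmat_adjoint_def by simp
  have w': "gram_vec M N \<Phi>' e f l' k' n' = mvec K V (\<lambda>j. gram_vec M N \<Phi> e f j k' n') l'"
    if "l' < K" for l' k' n'
    unfolding V_def by (rule gram_vec_mix[OF rel that])
  have "mvec K (kmat_conj K (kmat_adjoint V) X) (\<lambda>j. gram_vec M N \<Phi>' e f j k n) l
      = mvec K (kmat_conj K (kmat_adjoint V) X) (mvec K V (\<lambda>j. gram_vec M N \<Phi> e f j k n)) l"
    using w' by (intro mvec_cong) auto
  also have "\<dots> = mvec K V (mvec K X (\<lambda>j. gram_vec M N \<Phi> e f j k n)) l"
    by (rule conj_mvec[OF V l])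
  also have "\<dots> = mvec K V (\<lambda>j. gram_vec M N \<Phi> e f j m n) l"
    using R by (intro mvec_cong) auto
  also have "\<dots> = gram_vec M N \<Phi>' e f l m n" using w'[OF l] by simp
  finally show ?thesis unfolding adjV .
qed

lemma gram_vec_expansion:
  assumes e: "is_onb M e" and f: "is_onb N f" and i: "i < M" and j: "j < N"
  shows "(\<Sum>m<M. \<Sum>n<N. cnj (gram_vec M N \<Psi> e f l m n) * e m i * f n j) = \<Psi> l i j"
proof -
  have A: "(\<Sum>n<N. cnj (gram_vec M N \<Psi> e f l m n) * f n j) = (\<Sum>i'<M. \<Psi> l i' j * cnj (e m i'))" for m
  proof -
    have "(\<Sum>n<N. cnj (gram_vec M N \<Psi> e f l m n) * f n j)
        = (\<Sum>n<N. \<Sum>i'<M. \<Sum>j'<N. \<Psi> l i' j' * cnj (e m i') * (f n j * cnj (f n j')))"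
      unfolding gram_vec_def
      by (intro sum.cong refl) (simp add: cnj_sum sum_distrib_right sum_distrib_left algebra_simps)
    also have "\<dots> = (\<Sum>i'<M. \<Sum>j'<N. \<Sum>n<N. \<Psi> l i' j' * cnj (e m i') * (f n j * cnj (f n j')))"
      by (rule sum_swap3)
    also have "\<dots> = (\<Sum>i'<M. \<Sum>j'<N. \<Psi> l i' j' * cnj (e m i') * (if j = j' then 1 else 0))"
      by (intro sum.cong refl) (simp add: sum_distrib_left[symmetric] onb_columns[OF f j])
    also have "\<dots> = (\<Sum>i'<M. \<Psi> l i' j * cnj (e m i'))"
      by (intro sum.cong refl) (rule sum_kronecker(3)[OF j])
    finally show ?thesis .
  qed
  have "(\<Sum>m<M. \<Sum>n<N. cnj (gram_vec M N \<Psi> e f l m n) * e m i * f n j)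
      = (\<Sum>m<M. e m i * (\<Sum>n<N. cnj (gram_vec M N \<Psi> e f l m n) * f n j))"
    by (simp add: sum_distrib_left algebra_simps)
  also have "\<dots> = (\<Sum>m<M. e m i * (\<Sum>i'<M. \<Psi> l i' j * cnj (e m i')))" using A by simp
  also have "\<dots> = (\<Sum>m<M. \<Sum>i'<M. \<Psi> l i' j * (e m i * cnj (e m i')))"
    by (simp add: sum_distrib_left algebra_simps)
  also have "\<dots> = (\<Sum>i'<M. \<Sum>m<M. \<Psi> l i' j * (e m i * cnj (e m i')))" by (rule sum.swap)
  also have "\<dots> = (\<Sum>i'<M. \<Psi> l i' j * (if i = i' then 1 else 0))"
    by (intro sum.cong refl) (simp add: sum_distrib_left[symmetric] onb_columns[OF e i])
  also have "\<dots> = \<Psi> l i j" by (rule sum_kronecker(3)[OF i])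
  finally show ?thesis .
qed

text \<open>If each Gram vector factors as w^l_mn = d_lm w^l_0n, every Phi_l is the product
  vector (sum_m cnj(d_lm) e_m) (x) (sum_n cnj(w^l_0n) f_n), so rho is K-separable.\<close>
lemma proportional_gram_separable:
  assumes e: "is_onb M e" and f: "is_onb N f" and D: "is_decomp M N K \<rho> \<Phi>"
    and factor: "\<forall>l<K. \<forall>m<M. \<forall>n<N. gram_vec M N \<Phi> e f l m n = d l m * gram_vec M N \<Phi> e f l 0 n"
  shows "K_separable M N K \<rho>"
proof -
  define w where "w = gram_vec M N \<Phi> e f"
  define \<phi> where "\<phi> = (\<lambda>l i. \<Sum>m<M. cnj (d l m) * e m i)"
  define \<psi> where "\<psi> = (\<lambda>l j. \<Sum>n<N. cnj (w l 0 n) * f n j)"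
  have "\<Phi> l i j = \<phi> l i * \<psi> l j" if l: "l < K" and i: "i < M" and j: "j < N" for l i j
  proof -
    have "\<Phi> l i j = (\<Sum>m<M. \<Sum>n<N. cnj (w l m n) * e m i * f n j)"
      unfolding w_def using gram_vec_expansion[OF e f i j] by simp
    also have "\<dots> = (\<Sum>m<M. \<Sum>n<N. (cnj (d l m) * e m i) * (cnj (w l 0 n) * f n j))"
    proof (intro sum.cong refl)
      fix m n assume "m \<in> {..<M}" "n \<in> {..<N}"
      then have "w l m n = d l m * w l 0 n" using factor l unfolding w_def by blast
      then show "cnj (w l m n) * e m i * f n j = (cnj (d l m) * e m i) * (cnj (w l 0 n) * f n j)"
        by (simp add: algebra_simps)
    qed
    also have "\<dots> = \<phi> l i * \<psi> l j" unfolding \<phi>_def \<psi>_def by (simp add: sum_product)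
    finally show ?thesis .
  qed
  then have "is_decomp M N K \<rho> (\<lambda>l i j. \<phi> l i * \<psi> l j)"
    by (intro decomp_cong[OF _ D]) simp
  then show ?thesis unfolding K_separable_def by blast
qed

section \<open>A basis in generic position\<close>

lemma root_of_unity_facts:
  assumes M0: "0 < M"
  defines "\<omega> \<equiv> cis (2 * pi / real M)"
  shows "\<omega> ^ M = 1" and "\<And>d. 0 < d \<Longrightarrow> d < M \<Longrightarrow> \<omega> ^ d \<noteq> 1" and "cmod \<omega> = 1"
proof -
  have pw: "\<omega> ^ d = cis (2 * pi * real d / real M)" for d
  proof -
    have "\<omega> ^ d = cis (real d * (2 * pi / real M))" unfolding \<omega>_def by (rule Complex.DeMoivre)
    also have "real d * (2 * pi / real M) = 2 * pi * real d / real M" by simp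
    finally show ?thesis .
  qed
  show "\<omega> ^ M = 1" unfolding pw using M0 by (simp add: complex_eq_iff)
  show "cmod \<omega> = 1" unfolding \<omega>_def by simp
  fix d assume d: "0 < d" "d < M"
  have inj: "inj_on (\<lambda>k. cis (2 * pi * real k / real M)) {..<M}"
    using Complex.bij_betw_roots_unity[OF M0] unfolding bij_betw_def by blast
  show "\<omega> ^ d \<noteq> 1"
  proof
    assume "\<omega> ^ d = 1"
    then have "cis (2 * pi * real d / real M) = cis (2 * pi * real 0 / real M)" unfolding pw by simp
    then have "d = 0" using inj d M0 unfolding inj_on_def by blast
    then show False using d by simp
  qed
qed

text \<open>Orthogonality of distinct characters: for m < k < M the geometric sum of
  q = conj(omega^m) omega^k = omega^(k-m) \<noteq> 1 with q^M = 1 vanishes.\<close>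
lemma root_of_unity_orthogonal:
  assumes M0: "0 < M" and mk: "m < k" "k < M"
  defines "\<omega> \<equiv> cis (2 * pi / real M)"
  shows "(\<Sum>i<M. (cnj (\<omega> ^ m) * \<omega> ^ k) ^ i) = 0"
proof -
  note om = root_of_unity_facts[OF M0, folded \<omega>_def]
  define q where "q = \<omega> ^ (k - m)"
  have "cnj (\<omega> ^ m) * \<omega> ^ m = 1"
    using om(3) complex_norm_square[of "\<omega> ^ m"] by (simp add: norm_power mult.commute)
  moreover have "\<omega> ^ k = \<omega> ^ m * q" unfolding q_def using mk by (simp add: power_add[symmetric])
  ultimately have qeq: "cnj (\<omega> ^ m) * \<omega> ^ k = q" by (simp add: mult.assoc[symmetric])
  have q1: "q \<noteq> 1" unfolding q_def using om(2)[of "k - m"] mk by simp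
  have "q ^ M = (\<omega> ^ M) ^ (k - m)" unfolding q_def by (metis power_mult mult.commute)
  then have "q ^ M = 1" using om(1) by simp
  then show ?thesis unfolding qeq using q1 by (simp add: sum_gp_strict)
qed

lemma twisted_fourier_onb:
  assumes M0: "0 < M" and z1: "cmod z = 1"
  defines "\<omega> \<equiv> cis (2 * pi / real M)" and "c \<equiv> complex_of_real (1 / sqrt (real M))"
  shows "is_onb M (\<lambda>m i. c * (z * \<omega> ^ m) ^ i)"
proof -
  note om = root_of_unity_facts[OF M0, folded \<omega>_def]
  define e where "e = (\<lambda>m i. c * (z * \<omega> ^ m) ^ i)"
  have zz: "cnj z * z = 1" using z1 complex_norm_square[of z] by (simp add: mult.commute)
  have cc: "cnj c * c * of_nat M = 1"
  proof -
    have "complex_of_real (sqrt (real M)) * complex_of_real (sqrt (real M)) = of_nat M"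
      by (simp flip: of_real_mult)
    then show ?thesis unfolding c_def using M0 by (simp add: field_simps)
  qed
  have ipe: "(\<Sum>i<M. cnj (e m i) * e k i) = cnj c * c * (\<Sum>i<M. (cnj (\<omega> ^ m) * \<omega> ^ k) ^ i)" for m k
  proof -
    have "(\<Sum>i<M. cnj (e m i) * e k i) = (\<Sum>i<M. cnj c * c * ((cnj z * z) * (cnj (\<omega> ^ m) * \<omega> ^ k)) ^ i)"
      unfolding e_def by (intro sum.cong refl) (simp add: power_mult_distrib algebra_simps)
    then show ?thesis unfolding zz by (simp add: sum_distrib_left)
  qed
  have om_pow: "cnj (\<omega> ^ m) * \<omega> ^ m = 1" for m
    using om(3) complex_norm_square[of "\<omega> ^ m"] by (simp add: norm_power mult.commute)
  have orth_lt: "(\<Sum>i<M. cnj (e m i) * e k i) = 0" if "m < k" "k < M" for m k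
    unfolding ipe \<omega>_def root_of_unity_orthogonal[OF M0 that] by simp
  show ?thesis
    unfolding is_onb_def e_def[symmetric]
  proof (intro allI impI)
    fix m k assume m: "m < M" and k: "k < M"
    consider "m = k" | "m < k" | "k < m" by linarith
    then show "(\<Sum>i<M. cnj (e m i) * e k i) = (if m = k then 1 else 0)"
    proof cases
      case 1
      have "(\<Sum>i<M. cnj (e m i) * e k i) = cnj c * c * (\<Sum>i<M. 1 ^ i)"
        unfolding ipe 1 om_pow ..
      then show ?thesis using cc 1 by simp
    next
      case 2
      then show ?thesis using orth_lt k by simp
    next
      case 3
      then have "cnj (\<Sum>i<M. cnj (e k i) * e m i) = 0" using orth_lt m by simp
      then show ?thesis using 3 by (simp add: cnj_sum mult.commute)
    qed
  qed
qed

lemma unit_circle_infinite: "infinite (range (\<lambda>n::nat. cis (1 / real (Suc n))))"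
proof -
  have "inj (\<lambda>n::nat. cis (1 / real (Suc n)))"
  proof (rule injI)
    fix a b :: nat assume "cis (1 / real (Suc a)) = cis (1 / real (Suc b))"
    then have "cos (1 / real (Suc a)) = cos (1 / real (Suc b))" by (metis cis.sel(1))
    moreover have "1 / real (Suc n) \<le> pi" for n
    proof -
      have "1 / real (Suc n) \<le> 1" by simp
      then show ?thesis using pi_ge_two by linarith
    qed
    moreover have "0 \<le> 1 / real (Suc n)" for n by simp
    ultimately have "1 / real (Suc a) = 1 / real (Suc b)" using cos_inj_pi by blast
    then show "a = b" by simp
  qed
  then show ?thesis using finite_imageD infinite_UNIV_nat by blast
qed

text \<open>For finitely many vectors phi_l of C^M there is an orthonormal basis none of whose
  members is orthogonal to a nonzero phi_l: <phi_l|e_m> is, up to a constant, the value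
  of a nonzero polynomial at z omega^m, so it suffices to avoid finitely many phases z.\<close>
lemma generic_onb:
  fixes \<phi> :: "nat \<Rightarrow> nat \<Rightarrow> complex"
  assumes M0: "0 < M"
  shows "\<exists>e. is_onb M e \<and> (\<forall>l<K. (\<exists>i<M. \<phi> l i \<noteq> 0) \<longrightarrow> (\<forall>m<M. (\<Sum>i<M. cnj (\<phi> l i) * e m i) \<noteq> 0))"
proof -
  define \<omega> where "\<omega> = cis (2 * pi / real M)"
  have om0: "\<omega> \<noteq> 0" unfolding \<omega>_def by simp
  define p where "p = (\<lambda>l. \<Sum>i<M. monom (cnj (\<phi> l i)) i)"
  have polyp: "poly (p l) x = (\<Sum>i<M. cnj (\<phi> l i) * x ^ i)" for l x
    unfolding p_def by (simp add: poly_sum poly_monom)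
  have pne: "p l \<noteq> 0" if "\<exists>i<M. \<phi> l i \<noteq> 0" for l
  proof
    assume p0: "p l = 0"
    from that obtain i where i: "i < M" "\<phi> l i \<noteq> 0" by blast
    have "coeff (p l) i = (\<Sum>j<M. if j = i then cnj (\<phi> l j) else 0)"
      unfolding p_def by (simp add: coeff_sum coeff_monom)
    also have "\<dots> = cnj (\<phi> l i)" using i by simp
    finally show False using p0 i by simp
  qed
  define L where "L = {l. l < K \<and> p l \<noteq> 0}"
  define Bad where "Bad = (\<Union>l\<in>L. \<Union>m<M. (\<lambda>r. r / \<omega> ^ m) ` {r. poly (p l) r = 0})"
  have "finite Bad" unfolding Bad_def L_def by (auto intro!: finite_imageI poly_roots_finite)
  then have "infinite (range (\<lambda>n::nat. cis (1 / real (Suc n))) - Bad)"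
    using unit_circle_infinite by (rule Diff_infinite_finite)
  then obtain z where zS: "z \<in> range (\<lambda>n::nat. cis (1 / real (Suc n)))" and zB: "z \<notin> Bad"
    by (metis DiffE ex_in_conv finite.emptyI)
  have z1: "cmod z = 1" using zS by auto
  define c where "c = complex_of_real (1 / sqrt (real M))"
  have c0: "c \<noteq> 0" unfolding c_def using M0 by simp
  define e where "e = (\<lambda>m i. c * (z * \<omega> ^ m) ^ i)"
  have onb: "is_onb M e" unfolding e_def c_def \<omega>_def by (rule twisted_fourier_onb[OF M0 z1])
  have "(\<Sum>i<M. cnj (\<phi> l i) * e m i) \<noteq> 0" if l: "l < K" and ne: "\<exists>i<M. \<phi> l i \<noteq> 0" and m: "m < M" for l m
  proof
    assume "(\<Sum>i<M. cnj (\<phi> l i) * e m i) = 0"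
    then have "c * poly (p l) (z * \<omega> ^ m) = 0" unfolding polyp e_def
      by (simp add: sum_distrib_left algebra_simps)
    then have root: "poly (p l) (z * \<omega> ^ m) = 0" using c0 by simp
    have "l \<in> L" unfolding L_def using l pne[OF ne] by simp
    moreover have "z = (z * \<omega> ^ m) / \<omega> ^ m" using om0 by simp
    ultimately have "z \<in> Bad" unfolding Bad_def using root m by blast
    then show False using zB by simp
  qed
  then show ?thesis using onb by blast
qed

section \<open>The three implications\<close>

definition kmat_diag :: "(nat \<Rightarrow> complex) \<Rightarrow> nat \<Rightarrow> nat \<Rightarrow> complex" where
  "kmat_diag a = (\<lambda>l j. if l = j then a l else 0)"

lemma diagonal_mvec:
  assumes "kmat_diagonal K D" "l < K"
  shows "mvec K D x l = D l l * x l"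
proof -
  have "mvec K D x l = (\<Sum>j<K. if l = j then D l l * x l else 0)"
    unfolding mvec_def using assms unfolding kmat_diagonal_def by (intro sum.cong refl) auto
  also have "\<dots> = D l l * x l" using assms(2) by (subst sum.delta') auto
  finally show ?thesis .
qed

lemma diag_mult:
  assumes "i < K"
  shows "kmat_mult K (kmat_diag a) (kmat_diag b) i k = (if i = k then a i * b i else 0)"
proof -
  have "kmat_mult K (kmat_diag a) (kmat_diag b) i k
      = (\<Sum>j<K. if i = j then a i * (if j = k then b j else 0) else 0)"
    unfolding kmat_mult_def kmat_diag_def by (intro sum.cong refl) auto
  also have "\<dots> = (if i = k then a i * b i else 0)" using assms by (subst sum.delta') auto
  finally show ?thesis .
qed

lemma diag_normal: "kmat_normal K (kmat_diag a)"
proof -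
  have "kmat_adjoint (kmat_diag a) = kmat_diag (\<lambda>l. cnj (a l))"
    unfolding kmat_adjoint_def kmat_diag_def by (intro ext) auto
  then show ?thesis unfolding kmat_normal_def by (simp add: diag_mult mult.commute)
qed

lemma diag_commute: "kmat_commute K (kmat_diag a) (kmat_diag b)"
  unfolding kmat_commute_def by (simp add: diag_mult mult.commute)

text \<open>For a product decomposition and a basis e with <phi_l|e_m> \<noteq> 0 whenever phi_l \<noteq> 0,
  the Gram vectors factor as alpha_lm beta_ln and the diagonal matrices
  diag_l(alpha_lm / alpha_lk) satisfy the Gram condition.\<close>
lemma product_gram_condition:
  fixes \<phi> \<psi> :: "nat \<Rightarrow> nat \<Rightarrow> complex"
  assumes gen: "\<forall>l<K. (\<exists>i<M. \<phi> l i \<noteq> 0) \<longrightarrow> (\<forall>m<M. (\<Sum>i<M. cnj (\<phi> l i) * e m i) \<noteq> 0)"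
  shows "gram_condition M N K (\<lambda>l i j. \<phi> l i * \<psi> l j) e f"
proof -
  define \<alpha> where "\<alpha> = (\<lambda>l m. \<Sum>i<M. cnj (\<phi> l i) * e m i)"
  define \<beta> where "\<beta> = (\<lambda>l n. \<Sum>j<N. cnj (\<psi> l j) * f n j)"
  let ?w = "gram_vec M N (\<lambda>l i j. \<phi> l i * \<psi> l j) e f"
  have w: "?w l m n = \<alpha> l m * \<beta> l n" for l m n
    unfolding gram_vec_def \<alpha>_def \<beta>_def sum_product by (intro sum.cong refl) (simp add: algebra_simps)
  define Mat where "Mat = (\<lambda>m k. kmat_diag (\<lambda>l. if \<alpha> l k = 0 then 0 else \<alpha> l m / \<alpha> l k))"
  have ratio: "(if \<alpha> l k = 0 then 0 else \<alpha> l m / \<alpha> l k) * \<alpha> l k = \<alpha> l m"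
    if "l < K" "k < M" "m < M" for l k m
  proof (cases "\<alpha> l k = 0")
    case True
    then have "\<not> (\<exists>i<M. \<phi> l i \<noteq> 0)" using gen that unfolding \<alpha>_def by blast
    then show ?thesis using True unfolding \<alpha>_def by simp
  qed simp
  have "(\<Sum>j<K. Mat m k l j * ?w j k n) = ?w l m n"
    if "m < M" "k < M" "l < K" for m k n l
  proof -
    have "kmat_diagonal K (Mat m k)" unfolding Mat_def kmat_diag_def kmat_diagonal_def by simp
    from diagonal_mvec[OF this \<open>l < K\<close>, of "\<lambda>j. ?w j k n"]
    have "(\<Sum>j<K. Mat m k l j * ?w j k n) = Mat m k l l * ?w l k n" unfolding mvec_def .
    also have "\<dots> = ?w l m n" unfolding Mat_def kmat_diag_def w using ratio that by simp
    finally show ?thesis .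
  qed
  then show ?thesis unfolding gram_condition_def
    by (intro exI[of _ Mat] conjI allI impI) (simp_all add: Mat_def diag_normal diag_commute)
qed

text \<open>The Gram condition is preserved when the decomposition is mixed by a unitary W:
  conjugate all matrices by the transpose of W.\<close>
lemma gram_condition_mix:
  assumes W: "kmat_unitary K W"
    and rel: "\<forall>l<K. \<forall>i<M. \<forall>j<N. \<Phi>' l i j = (\<Sum>k<K. W l k * \<Phi> k i j)"
    and G: "gram_condition M N K \<Phi> e f"
  shows "gram_condition M N K \<Phi>' e f"
proof -
  from G obtain Mat where N: "\<forall>m<M. \<forall>k<M. kmat_normal K (Mat m k)"
    and C: "\<forall>m<M. \<forall>k<M. \<forall>m'<M. \<forall>k'<M. kmat_commute K (Mat m k) (Mat m' k')"
    and R: "\<forall>m<M. \<forall>k<M. \<forall>n<N. \<forall>l<K. mvec K (Mat m k) (\<lambda>j. gram_vec M N \<Phi> e f j k n) l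
                                        = gram_vec M N \<Phi> e f l m n"
    unfolding gram_condition_def mvec_def by blast
  have T: "kmat_unitary K (\<lambda>a b. W b a)" by (rule unitary_transpose[OF W])
  define Mat' where "Mat' = (\<lambda>m k. kmat_conj K (\<lambda>a b. W b a) (Mat m k))"
  have "kmat_normal K (Mat' m k)" if "m < M" "k < M" for m k
    unfolding Mat'_def using conj_normal[OF T] N that by blast
  moreover have "kmat_commute K (Mat' m k) (Mat' m' k')"
    if "m < M" "k < M" "m' < M" "k' < M" for m k m' k'
    unfolding Mat'_def using conj_commute[OF T] C that by blast
  moreover have "mvec K (Mat' m k) (\<lambda>j. gram_vec M N \<Phi>' e f j k n) l = gram_vec M N \<Phi>' e f l m n"
    if "m < M" "k < M" "n < N" "l < K" for m k n l
    unfolding Mat'_def by (rule intertwining_mix[OF W rel _ \<open>l < K\<close>]) (use R that in blast)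
  ultimately show ?thesis unfolding gram_condition_def mvec_def
    by (intro exI[of _ Mat'] conjI allI impI) simp_all
qed

text \<open>By unitary freedom the Gram condition does not depend on the decomposition.\<close>
lemma gram_condition_transfer:
  assumes D1: "is_decomp M N K \<rho> \<Phi>" and D2: "is_decomp M N K \<rho> \<Phi>'"
    and G: "gram_condition M N K \<Phi> e f"
  shows "gram_condition M N K \<Phi>' e f"
proof -
  from decomp_unitary_freedom[OF D1 D2] obtain U where "kmat_unitary K U"
    and "\<forall>l<K. \<forall>i<M. \<forall>j<N. \<Phi>' l i j = (\<Sum>k<K. U l k * \<Phi> k i j)" by blast
  from gram_condition_mix[OF this G] show ?thesis .
qed

lemma separable_gram_condition:
  assumes sep: "K_separable M N K \<rho>" and M0: "0 < M"
  shows "\<exists>e. is_onb M e \<and> (\<forall>\<Phi>. is_decomp M N K \<rho> \<Phi> \<longrightarrow> gram_condition M N K \<Phi> e f)"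
proof -
  from sep obtain \<phi> \<psi> where D: "is_decomp M N K \<rho> (\<lambda>l i j. \<phi> l i * \<psi> l j)"
    unfolding K_separable_def by blast
  from generic_onb[OF M0, of K \<phi>] obtain e where e: "is_onb M e"
    and gen: "\<forall>l<K. (\<exists>i<M. \<phi> l i \<noteq> 0) \<longrightarrow> (\<forall>m<M. (\<Sum>i<M. cnj (\<phi> l i) * e m i) \<noteq> 0)" by blast
  have "gram_condition M N K (\<lambda>l i j. \<phi> l i * \<psi> l j) e f" by (rule product_gram_condition[OF gen])
  then show ?thesis using e gram_condition_transfer[OF D] by blast
qed

text \<open>Diagonalize all matrices simultaneously by U and mix the decomposition with the
  transpose of U: the new Gram vectors satisfy w^l_mn = d_lm w^l_0n.\<close>
lemma gram_condition_separable:
  assumes e: "is_onb M e" and f: "is_onb N f" and M0: "0 < M"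
    and D: "is_decomp M N K \<rho> \<Phi>" and G: "gram_condition M N K \<Phi> e f"
  shows "K_separable M N K \<rho>"
proof -
  from G obtain Mat where N: "\<forall>m<M. \<forall>k<M. kmat_normal K (Mat m k)"
    and C: "\<forall>m<M. \<forall>k<M. \<forall>m'<M. \<forall>k'<M. kmat_commute K (Mat m k) (Mat m' k')"
    and R: "\<forall>m<M. \<forall>k<M. \<forall>n<N. \<forall>l<K. mvec K (Mat m k) (\<lambda>j. gram_vec M N \<Phi> e f j k n) l
                                        = gram_vec M N \<Phi> e f l m n"
    unfolding gram_condition_def mvec_def by blast
  define F where "F = (\<lambda>p. Mat (fst p) (snd p)) ` ({..<M} \<times> {..<M})"
  have "finite F" unfolding F_def by simp
  moreover have "\<forall>A\<in>F. kmat_normal K A" unfolding F_def using N by auto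
  moreover have "\<forall>A\<in>F. \<forall>B\<in>F. kmat_commute K A B" unfolding F_def using C by auto
  ultimately have "\<exists>U. kmat_unitary K U \<and> (\<forall>A\<in>F. kmat_diagonal K (kmat_conj K U A))"
    by (rule simultaneous_diagonalization)
  then obtain U where U: "kmat_unitary K U" and dg: "\<forall>A\<in>F. kmat_diagonal K (kmat_conj K U A)"
    by blast
  define W where "W = (\<lambda>l k. U k l)"
  have W: "kmat_unitary K W" unfolding W_def by (rule unitary_transpose[OF U])
  define \<Phi>' where "\<Phi>' = (\<lambda>l i j. \<Sum>k<K. W l k * \<Phi> k i j)"
  have D': "is_decomp M N K \<rho> \<Phi>'" unfolding \<Phi>'_def by (rule mix_decomp[OF W D])
  have rel: "\<forall>l<K. \<forall>i<M. \<forall>j<N. \<Phi>' l i j = (\<Sum>k<K. W l k * \<Phi> k i j)" unfolding \<Phi>'_def by simp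
  have "gram_vec M N \<Phi>' e f l m n = kmat_conj K U (Mat m 0) l l * gram_vec M N \<Phi>' e f l 0 n"
    if l: "l < K" and m: "m < M" and n: "n < N" for l m n
  proof -
    have "Mat m 0 \<in> F" unfolding F_def using m M0 by force
    then have diag: "kmat_diagonal K (kmat_conj K U (Mat m 0))" using dg by blast
    have "\<forall>l<K. mvec K (Mat m 0) (\<lambda>j. gram_vec M N \<Phi> e f j 0 n) l = gram_vec M N \<Phi> e f l m n"
      using R m M0 n by blast
    from intertwining_mix[OF W rel this l]
    have "mvec K (kmat_conj K U (Mat m 0)) (\<lambda>j. gram_vec M N \<Phi>' e f j 0 n) l
        = gram_vec M N \<Phi>' e f l m n" unfolding W_def .
    then show ?thesis unfolding diagonal_mvec[OF diag l] by simp
  qed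
  then show ?thesis
    by (intro proportional_gram_separable[OF e f D', where d="\<lambda>l m. kmat_conj K U (Mat m 0) l l"])
      blast
qed

theorem theorem3:
  fixes M N K :: nat
    and \<rho> :: "nat \<Rightarrow> nat \<Rightarrow> nat \<Rightarrow> nat \<Rightarrow> complex"
    and f :: "nat \<Rightarrow> nat \<Rightarrow> complex"
  assumes "is_state M N \<rho>"
    and "is_onb N f"
    and "0 < K"
    and "\<exists>\<Phi>. is_decomp M N K \<rho> \<Phi>"
  shows "(K_separable M N K \<rho> \<longleftrightarrow>
            (\<exists>e. is_onb M e \<and> (\<forall>\<Phi>. is_decomp M N K \<rho> \<Phi> \<longrightarrow> gram_condition M N K \<Phi> e f)))
       \<and> ((\<exists>e. is_onb M e \<and> (\<forall>\<Phi>. is_decomp M N K \<rho> \<Phi> \<longrightarrow> gram_condition M N K \<Phi> e f)) \<longleftrightarrow>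
            (\<exists>e \<Phi>. is_onb M e \<and> is_decomp M N K \<rho> \<Phi> \<and> gram_condition M N K \<Phi> e f))"
proof -
  have M0: "0 < M"
  proof (rule ccontr)
    assume "\<not> 0 < M"
    then show False using assms(1) unfolding is_state_def by simp
  qed
  have a_b: "\<exists>e. is_onb M e \<and> (\<forall>\<Phi>. is_decomp M N K \<rho> \<Phi> \<longrightarrow> gram_condition M N K \<Phi> e f)"
    if "K_separable M N K \<rho>"
    using separable_gram_condition[OF that M0] .
  have b_c: "\<exists>e \<Phi>. is_onb M e \<and> is_decomp M N K \<rho> \<Phi> \<and> gram_condition M N K \<Phi> e f"
    if "\<exists>e. is_onb M e \<and> (\<forall>\<Phi>. is_decomp M N K \<rho> \<Phi> \<longrightarrow> gram_condition M N K \<Phi> e f)"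
    using that assms(4) by blast
  have c_a: "K_separable M N K \<rho>"
    if "\<exists>e \<Phi>. is_onb M e \<and> is_decomp M N K \<rho> \<Phi> \<and> gram_condition M N K \<Phi> e f"
    using that gram_condition_separable[OF _ assms(2) M0] by blast
  show ?thesis using a_b b_c c_a by blast
qed

end
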